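(* Let $\zeta=e^{2\pi i/n}$. The matrices $\mathcal{S}=(\mathcal{S}_{\lambda\mu})$ and $\mathcal{T}=(\mathcal{T}_{\lambda\mu})$ indexed by $\lambda,\mu\in\mathcal{A}_{k,n}$, with $$\mathcal{S}_{\lambda\mu}=\sqrt{\frac{|S_\lambda|}{|S_\mu|}}\frac{m_\lambda(\zeta^\mu)}{n^{k/2}},\qquad \mathcal{T}_{\lambda\mu}=\delta_{\lambda\mu}\,\zeta^{-\frac{kn(n-1)}{24}}\prod_{i=1}^k\zeta^{\frac{\lambda_i(n-\lambda_i)}{2}},$$ satisfy $(\mathcal{S}\mathcal{T})^3=\mathcal{S}^2=\mathcal{C}$ with $\mathcal{C}_{\lambda\mu}=\delta_{\lambda\mu^*}$, $\mathcal{C}^2=\mathrm{Id}$, $\mathcal{S}^{-1}=\mathcal{S}^*$, $\mathcal{S}^*=\mathcal{C}\mathcal{S}=\mathcal{S}\mathcal{C}$ and $\mathcal{C}\mathcal{T}\mathcal{C}=\mathcal{T}$; in particular they yield a representation of (the double cover of) the modular group.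
   Context: Fix $k,n\ge1$. $\mathcal{A}_{k,n}$ is the set of integer vectors $(\lambda_1,\dots,\lambda_k)$ with $n\ge\lambda_1\ge\cdots\ge\lambda_k>0$, regarded as functions $\mathbb{Z}\to\mathbb{Z}$ via $\lambda_{i+k}=\lambda_i-n$. $m_\lambda(\zeta^\mu)$ is the monomial symmetric polynomial of $(\lambda_1,\dots,\lambda_k)$ evaluated at $x_j=\zeta^{\mu_j}$; $|S_\lambda|=\prod_i m_i(\lambda)!$ where $m_i(\lambda)$ is the multiplicity of the part $i$. For rational $q$, $\zeta^q:=e^{2\pi iq/n}$. $\mathcal{S}^*$ is the conjugate transpose. For $\lambda\in\mathcal{A}_{k,n}$, $\lambda^*\in\mathcal{A}_{k,n}$ is defined as follows: let $\rho$ be the function $\mathbb{Z}\to\mathbb{Z}$ with $(\rho_1,\dots,\rho_k)=(n-\lambda_k,\dots,n-\lambda_1)$ and $\rho_{i+k}=\rho_i-n$; then $\lambda^*_i=\rho_{i-m}$ with $m=m_n(\lambda)$ (the image of $\rho$ under $\tau^{m}$, $\tau(j)=j-1$). *)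

theory Defs
  imports "HOL-Analysis.Analysis" "HOL-Library.Multiset"
begin

text \<open>Partitions in A_{k,n}: integer lists (lambda_1,...,lambda_k), weakly decreasing,
  with n >= lambda_1 and lambda_k > 0. List position j (0-based) holds lambda_{j+1}.\<close>
definition Akn :: "nat \<Rightarrow> nat \<Rightarrow> int list set" where
  "Akn k n = {l. length l = k \<and> sorted_wrt (\<ge>) l \<and> (\<forall>x\<in>set l. 0 < x \<and> x \<le> int n)}"

definition zeta :: "nat \<Rightarrow> real \<Rightarrow> complex" where
  "zeta n q = exp (2 * of_real pi * \<i> * of_real q / of_nat n)"

text \<open>Extension of a list to a function Z -> Z, 1-indexed: f_{i+k} = f_i - n.\<close>
definition ext :: "nat \<Rightarrow> int list \<Rightarrow> int \<Rightarrow> int" where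
  "ext n l i = l ! nat ((i - 1) mod int (length l)) - int n * ((i - 1) div int (length l))"

definition pstar :: "nat \<Rightarrow> int list \<Rightarrow> int list" where
  "pstar n l = (let rho = map (\<lambda>x. int n - x) (rev l);
                    m = int (count (mset l) (int n))
                in map (\<lambda>i. ext n rho (int i - m)) [1..<length l + 1])"

definition monomial_sym :: "int list \<Rightarrow> (nat \<Rightarrow> complex) \<Rightarrow> complex" where
  "monomial_sym l x = (\<Sum>\<alpha>\<in>{\<alpha>. mset \<alpha> = mset l}. \<Prod>j<length l. x j ^ nat (\<alpha> ! j))"

definition stab_card :: "int list \<Rightarrow> nat" where
  "stab_card l = (\<Prod>i\<in>set l. fact (count (mset l) i))"

definition Smat :: "nat \<Rightarrow> nat \<Rightarrow> int list \<Rightarrow> int list \<Rightarrow> complex" where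
  "Smat k n l \<mu> = of_real (sqrt (real (stab_card l) / real (stab_card \<mu>)))
      * monomial_sym l (\<lambda>j. zeta n (of_int (\<mu> ! j)))
      / of_real (sqrt (real n) ^ k)"

definition Tmat :: "nat \<Rightarrow> nat \<Rightarrow> int list \<Rightarrow> int list \<Rightarrow> complex" where
  "Tmat k n l \<mu> = (if l = \<mu> then
      zeta n (- (real k * real n * (real n - 1) / 24))
      * (\<Prod>i<k. zeta n (of_int (l ! i * (int n - l ! i)) / 2))
    else 0)"

definition Cmat :: "nat \<Rightarrow> int list \<Rightarrow> int list \<Rightarrow> complex" where
  "Cmat n l \<mu> = (if l = pstar n \<mu> then 1 else 0)"

definition Idmat :: "int list \<Rightarrow> int list \<Rightarrow> complex" where
  "Idmat l \<mu> = (if l = \<mu> then 1 else 0)"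

definition ctrans :: "('a \<Rightarrow> 'a \<Rightarrow> complex) \<Rightarrow> 'a \<Rightarrow> 'a \<Rightarrow> complex" where
  "ctrans M a b = cnj (M b a)"

definition mmult :: "'a set \<Rightarrow> ('a \<Rightarrow> 'a \<Rightarrow> complex) \<Rightarrow> ('a \<Rightarrow> 'a \<Rightarrow> complex) \<Rightarrow> 'a \<Rightarrow> 'a \<Rightarrow> complex" where
  "mmult I M N a b = (\<Sum>c\<in>I. M a c * N c b)"

definition meq :: "'a set \<Rightarrow> ('a \<Rightarrow> 'a \<Rightarrow> complex) \<Rightarrow> ('a \<Rightarrow> 'a \<Rightarrow> complex) \<Rightarrow> bool" where
  "meq I M N \<longleftrightarrow> (\<forall>a\<in>I. \<forall>b\<in>I. M a b = N a b)"

end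

theory Submission
  imports Defs "HOL-Complex_Analysis.Complex_Analysis" "HOL-Real_Asymp.Real_Asymp"
    "HOL-Combinatorics.Multiset_Permutations"
begin

(* The four matrices are symmetric powers of kernels on the letters {1..n}, a model of Z/n:
   S comes from the Fourier kernel F a b = zeta^(ab) / sqrt n, S^* from its conjugate, T from the
   diagonal kernel a -> zeta^(-n(n-1)/24) zeta^(a(n-a)/2) and C from the reflection a -> -a.
   Taking symmetric powers is multiplicative, so every identity reduces to an identity between
   n x n kernels.  These follow from the orthogonality of characters, except (F T)^3 = F^2, which
   after completing the square is the quadratic Gauss sum
     sum_{c<N} exp(pi i c(N-c)/N) = sqrt N exp(pi i (N-1)/4).
   That is proved by Mordell's contour integration: exp(pi i z(N-z)/N) / (exp(2 pi i z) - 1) is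
   integrated around a parallelogram with two sides of slope -1; the residues give the sum, the
   horizontal sides vanish in the limit, and the two slanted sides combine into a Fresnel-type
   integral of an entire Gaussian, whose value is fixed by the trivial case N = 1. *)

section \<open>The quadratic Gauss sum\<close>

definition gauss_phase :: "nat \<Rightarrow> complex \<Rightarrow> complex" where
  "gauss_phase N z = exp (of_real pi * \<i> * z * (of_nat N - z) / of_nat N)"

definition exp2pi :: "complex \<Rightarrow> complex" where
  "exp2pi z = exp (2 * of_real pi * \<i> * z)"

definition gauss_kernel :: "nat \<Rightarrow> complex \<Rightarrow> complex" where
  "gauss_kernel N z = gauss_phase N z / (exp2pi z - 1)"

definition gauss_jump :: "nat \<Rightarrow> complex \<Rightarrow> complex" where
  "gauss_jump N z = exp (- of_real pi * \<i> * z\<^sup>2 / of_nat N - of_real pi * \<i> * z)"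

text \<open>Oblique coordinates: \<open>slant a b\<close> has real part \<open>a + b\<close> and imaginary part \<open>-b\<close>, so
  \<open>a = Re z + Im z\<close> is constant along the slanted sides of the contour.\<close>
definition slant :: "real \<Rightarrow> real \<Rightarrow> complex" where
  "slant a b = of_real a + of_real b * (1 - \<i>)"

definition slant_coord :: "complex \<Rightarrow> real" where
  "slant_coord z = inner (1 + \<i>) z"

text \<open>The slanted sides cross the real axis at \<open>-1/4\<close> and \<open>N - 1/4\<close>, enclosing exactly
  the poles \<open>0, \<dots>, N - 1\<close> of the kernel.\<close>
definition par_left :: real where
  "par_left = - 1/4"

definition gauss_parallelogram :: "nat \<Rightarrow> real \<Rightarrow> real \<Rightarrow> complex" where
  "gauss_parallelogram N R =
     linepath (slant par_left R) (slant (par_left + N) R) +++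
     linepath (slant (par_left + N) R) (slant (par_left + N) (-R)) +++
     linepath (slant (par_left + N) (-R)) (slant par_left (-R)) +++
     linepath (slant par_left (-R)) (slant par_left R)"

lemma slant_coord_eq: "slant_coord z = Re z + Im z"
  by (simp add: slant_coord_def inner_complex_def)

lemma slant_shift: "slant (a + real N) b = slant a b + of_nat N"
  by (simp add: slant_def)

lemma exp2pi_eq_1_iff: "exp2pi z = 1 \<longleftrightarrow> z \<in> \<int>"
proof -
  have "exp2pi z = 1 \<longleftrightarrow> Im z = 0 \<and> (\<exists>n::int. Re z = of_int n)"
    unfolding exp2pi_def exp_eq_1 by (auto simp: algebra_simps)
  also have "\<dots> \<longleftrightarrow> z \<in> \<int>"
    by (metis Ints_cases Ints_of_int Im_complex_of_real Re_complex_of_real complex_eq_iff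
        of_real_of_int_eq)
  finally show ?thesis .
qed

lemma slant_segment_param:
  assumes "z \<in> closed_segment (slant a1 b1) (slant a2 b2)"
  obtains u where "0 \<le> u" "u \<le> 1"
    "Re z = ((1-u)*a1 + u*a2) + ((1-u)*b1 + u*b2)" "Im z = -((1-u)*b1 + u*b2)"
proof -
  from assms obtain u where u: "0 \<le> u" "u \<le> 1" "z = (1 - u) *\<^sub>R slant a1 b1 + u *\<^sub>R slant a2 b2"
    by (auto simp: in_segment)
  have "Re z = ((1-u)*a1 + u*a2) + ((1-u)*b1 + u*b2)" "Im z = -((1-u)*b1 + u*b2)"
    unfolding u(3) by (simp_all add: slant_def scaleR_conv_of_real algebra_simps)
  with u that show ?thesis by blast
qed

lemma parallelogram_image:
  assumes "z \<in> path_image (gauss_parallelogram N R)" "0 \<le> R"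
  obtains a b where "par_left \<le> a" "a \<le> par_left + N" "-R \<le> b" "b \<le> R"
    "Re z = a + b" "Im z = -b" "a = par_left \<or> a = par_left + N \<or> b = R \<or> b = -R"
proof -
  have uN: "u * real N \<le> real N" "u * R \<le> R" if "0 \<le> u" "u \<le> 1" for u
    using that assms(2) mult_right_mono[of u 1 "real N"] mult_right_mono[of u 1 R] by auto
  consider "z \<in> closed_segment (slant par_left R) (slant (par_left + N) R)"
    | "z \<in> closed_segment (slant (par_left + N) R) (slant (par_left + N) (-R))"
    | "z \<in> closed_segment (slant (par_left + N) (-R)) (slant par_left (-R))"
    | "z \<in> closed_segment (slant par_left (-R)) (slant par_left R)"
    using assms by (auto simp: gauss_parallelogram_def path_image_join)
  then show ?thesis
  proof cases
    case 1
    then obtain u where "0 \<le> u" "u \<le> 1" "Re z = ((1-u)*par_left + u*(par_left+N)) + ((1-u)*R+u*R)"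
      "Im z = -((1-u)*R + u*R)" by (rule slant_segment_param)
    with uN[of u] assms(2) show ?thesis
      by (intro that[of "par_left + u * N" R]) (auto simp: algebra_simps)
  next
    case 2
    then obtain u where "0 \<le> u" "u \<le> 1" "Re z = ((1-u)*(par_left+N) + u*(par_left+N)) + ((1-u)*R+u*(-R))"
      "Im z = -((1-u)*R + u*(-R))" by (rule slant_segment_param)
    with uN[of u] assms(2) show ?thesis
      by (intro that[of "par_left + N" "R - 2*u*R"]) (auto simp: algebra_simps)
  next
    case 3
    then obtain u where "0 \<le> u" "u \<le> 1" "Re z = ((1-u)*(par_left+N) + u*par_left) + ((1-u)*(-R)+u*(-R))"
      "Im z = -((1-u)*(-R) + u*(-R))" by (rule slant_segment_param)
    with uN[of u] assms(2) show ?thesis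
      by (intro that[of "par_left + N - u * N" "-R"]) (auto simp: algebra_simps)
  next
    case 4
    then obtain u where "0 \<le> u" "u \<le> 1" "Re z = ((1-u)*par_left + u*par_left) + ((1-u)*(-R)+u*R)"
      "Im z = -((1-u)*(-R) + u*R)" by (rule slant_segment_param)
    with uN[of u] assms(2) show ?thesis
      by (intro that[of par_left "2*u*R - R"]) (auto simp: algebra_simps)
  qed
qed

lemma parallelogram_slant_coord:
  assumes "z \<in> path_image (gauss_parallelogram N R)" "0 \<le> R"
  shows "par_left \<le> slant_coord z \<and> slant_coord z \<le> par_left + N"
  using assms by (rule parallelogram_image) (auto simp: slant_coord_eq)

lemma parallelogram_avoids_Ints:
  assumes "z \<in> path_image (gauss_parallelogram N R)" "0 < R"
  shows "z \<notin> \<int>"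
proof
  assume "z \<in> \<int>"
  then obtain m :: int where m: "z = of_int m" by (auto elim: Ints_cases)
  obtain a b where ab: "-R \<le> b" "b \<le> R" "Re z = a + b" "Im z = -b"
    "a = par_left \<or> a = par_left + N \<or> b = R \<or> b = -R"
    using assms by (elim parallelogram_image) auto
  then have "a = par_left \<or> a = par_left + N" "Re z = a"
    using m assms(2) by auto
  then have "real_of_int (4 * m) = real_of_int (-1) \<or> real_of_int (4 * m) = real_of_int (4 * int N - 1)"
    using m by (auto simp: par_left_def)
  then have "4 * m = -1 \<or> 4 * m = 4 * int N - 1"
    by (simp only: of_int_eq_iff)
  then show False by presburger
qed

lemma gauss_parallelogram_closed: "pathfinish (gauss_parallelogram N R) = pathstart (gauss_parallelogram N R)"
  by (simp add: gauss_parallelogram_def)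

lemma valid_path_gauss_parallelogram: "valid_path (gauss_parallelogram N R)"
  by (simp add: gauss_parallelogram_def valid_path_join)

lemma Re_winding_number_slant_edge:
  assumes "0 < (a2-a1)*b2 - (b2-b1)*(a2-c)"
    and "of_real c \<notin> closed_segment (slant a1 b1) (slant a2 b2)"
  shows "0 < Re (winding_number (linepath (slant a1 b1) (slant a2 b2)) (of_real c))"
    and "\<bar>Re (winding_number (linepath (slant a1 b1) (slant a2 b2)) (of_real c))\<bar> < 1/2"
proof -
  have "Im ((slant a2 b2 - slant a1 b1) * cnj (slant a2 b2 - of_real c)) = (a2-a1)*b2 - (b2-b1)*(a2-c)"
    by (simp add: slant_def algebra_simps)
  with assms(1) show "0 < Re (winding_number (linepath (slant a1 b1) (slant a2 b2)) (of_real c))"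
    by (intro winding_number_linepath_pos_lt) simp
  show "\<bar>Re (winding_number (linepath (slant a1 b1) (slant a2 b2)) (of_real c))\<bar> < 1/2"
    using assms(2) by (intro winding_number_lt_half_linepath) simp
qed

lemma winding_number_parallelogram:
  assumes "0 < R" "c < N"
  shows "winding_number (gauss_parallelogram N R) (of_nat c) = 1"
proof -
  let ?p = "of_real (real c) :: complex"
  let ?w = "\<lambda>a1 b1 a2 b2. winding_number (linepath (slant a1 b1) (slant a2 b2)) ?p"
  define x0 where "x0 = par_left"
  define x1 where "x1 = par_left + N"
  have off: "?p \<notin> path_image (gauss_parallelogram N R)"
    using parallelogram_avoids_Ints[OF _ assms(1), of ?p N] by auto
  then have off_edges: "?p \<notin> closed_segment (slant x0 R) (slant x1 R)"
      "?p \<notin> closed_segment (slant x1 R) (slant x1 (-R))"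
      "?p \<notin> closed_segment (slant x1 (-R)) (slant x0 (-R))"
      "?p \<notin> closed_segment (slant x0 (-R)) (slant x0 R)"
    by (auto simp: gauss_parallelogram_def path_image_join x0_def x1_def)
  have split: "winding_number (gauss_parallelogram N R) ?p
      = ?w x0 R x1 R + ?w x1 R x1 (-R) + ?w x1 (-R) x0 (-R) + ?w x0 (-R) x0 R"
    using off_edges
    by (simp add: gauss_parallelogram_def winding_number_join path_image_join x0_def x1_def)
  have "real c \<le> real N - 1" using assms(2) by linarith
  then have pos: "0 < (x1 - x0) * R" "0 < 2 * R * (x1 - c)" "0 < 2 * R * (c - x0)"
    using assms by (auto simp: x0_def x1_def par_left_def)
  have edge: "0 < Re (?w a b a' b') \<and> Re (?w a b a' b') < 1/2"
    if "0 < (a'-a)*b' - (b'-b)*(a' - real c)" "?p \<notin> closed_segment (slant a b) (slant a' b')"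
    for a b a' b' :: real
    using Re_winding_number_slant_edge[OF that] by (simp add: abs_less_iff)
  have "0 < Re (winding_number (gauss_parallelogram N R) ?p)"
    "Re (winding_number (gauss_parallelogram N R) ?p) < 2"
    unfolding split
    using edge[where a=x0 and b=R and a'=x1 and b'=R] edge[where a=x1 and b=R and a'=x1 and b'="-R"]
      edge[where a=x1 and b="-R" and a'=x0 and b'="-R"] edge[where a=x0 and b="-R" and a'=x0 and b'=R]
      pos off_edges
    by (simp_all add: algebra_simps)
  moreover have "winding_number (gauss_parallelogram N R) ?p \<in> \<int>"
    using integer_winding_number_eq[OF valid_path_imp_path[OF valid_path_gauss_parallelogram] off]
      gauss_parallelogram_closed by simp
  ultimately have "winding_number (gauss_parallelogram N R) ?p = 1"
    by (elim Ints_cases) auto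
  then show ?thesis by simp
qed

lemma gauss_phase_holomorphic: "gauss_phase N holomorphic_on A"
  unfolding gauss_phase_def divide_inverse by (intro holomorphic_intros)

lemma exp2pi_holomorphic: "exp2pi holomorphic_on A"
  unfolding exp2pi_def by (intro holomorphic_intros)

lemma residue_gauss_kernel:
  assumes "z \<in> \<int>"
  shows "residue (gauss_kernel N) z = gauss_phase N z / (2 * of_real pi * \<i>)"
proof -
  have one: "exp2pi z = 1" using assms exp2pi_eq_1_iff by simp
  have "((\<lambda>w. exp2pi w - 1) has_field_derivative 2 * of_real pi * \<i> * exp2pi z) (at z)"
    unfolding exp2pi_def by (auto intro!: derivative_eq_intros)
  then have deriv: "((\<lambda>w. exp2pi w - 1) has_field_derivative 2 * of_real pi * \<i>) (at z)"
    using one by simp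
  have "residue (\<lambda>w. gauss_phase N w / (exp2pi w - 1)) z = gauss_phase N z / (2 * of_real pi * \<i>)"
    by (rule residue_simple_pole_deriv[where s=UNIV])
       (auto intro!: gauss_phase_holomorphic holomorphic_intros exp2pi_holomorphic deriv
         simp: one gauss_phase_def)
  then show ?thesis by (simp add: gauss_kernel_def[abs_def])
qed

lemma contour_integral_gauss_parallelogram:
  assumes "0 < R" "0 < N"
  shows "contour_integral (gauss_parallelogram N R) (gauss_kernel N) = (\<Sum>c<N. gauss_phase N (of_nat c))"
proof -
  define S where "S = {z. par_left - 1/8 < slant_coord z} \<inter> {z. slant_coord z < par_left + N + 1/8}"
  define K where "K = {z. par_left \<le> slant_coord z} \<inter> {z. slant_coord z \<le> par_left + N}"
  define poles where "poles = (of_nat ` {..<N} :: complex set)"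
  have "open S" "convex S" "convex K"
    unfolding S_def K_def slant_coord_def
    by (intro open_Int open_halfspace_lt open_halfspace_gt convex_Int convex_halfspace_lt
        convex_halfspace_gt convex_halfspace_le convex_halfspace_ge)+
  have poles_in_S: "z \<in> poles" if "z \<in> S" "z \<in> \<int>" for z
  proof -
    from \<open>z \<in> \<int>\<close> obtain m :: int where m: "z = of_int m" by (auto elim: Ints_cases)
    then have "-3/8 < real_of_int m" "real_of_int m < real N - 1/8"
      using that by (auto simp: S_def par_left_def slant_coord_eq)
    then have "0 \<le> m" "m < int N" by linarith+
    then show ?thesis using m by (auto simp: poles_def image_iff intro!: bexI[of _ "nat m"])
  qed
  have holo: "gauss_kernel N holomorphic_on S - poles"
    unfolding gauss_kernel_def[abs_def]
    by (intro holomorphic_intros gauss_phase_holomorphic exp2pi_holomorphic)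
       (use poles_in_S exp2pi_eq_1_iff in auto)
  have image_K: "path_image (gauss_parallelogram N R) \<subseteq> K"
    using parallelogram_slant_coord assms by (auto simp: K_def)
  have "K \<subseteq> S" by (auto simp: K_def S_def)
  have image: "path_image (gauss_parallelogram N R) \<subseteq> S - poles"
  proof
    fix z assume z: "z \<in> path_image (gauss_parallelogram N R)"
    then have "z \<notin> \<int>" by (rule parallelogram_avoids_Ints[OF _ assms(1)])
    then show "z \<in> S - poles" using z image_K \<open>K \<subseteq> S\<close> by (auto simp: poles_def)
  qed
  have outside: "\<forall>z. z \<notin> S \<longrightarrow> winding_number (gauss_parallelogram N R) z = 0"
    using winding_number_zero_outside[OF valid_path_imp_path[OF valid_path_gauss_parallelogram]
        \<open>convex K\<close> gauss_parallelogram_closed _ image_K] \<open>K \<subseteq> S\<close> by auto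
  have "contour_integral (gauss_parallelogram N R) (gauss_kernel N)
      = 2 * pi * \<i> * (\<Sum>p\<in>poles. winding_number (gauss_parallelogram N R) p * residue (gauss_kernel N) p)"
    by (rule Residue_theorem[OF \<open>open S\<close> convex_connected[OF \<open>convex S\<close>] _ holo
          valid_path_gauss_parallelogram gauss_parallelogram_closed image outside])
       (simp add: poles_def)
  also have "\<dots> = 2 * pi * \<i> * (\<Sum>c<N. gauss_phase N (of_nat c) / (2 * of_real pi * \<i>))"
    unfolding poles_def using winding_number_parallelogram[OF assms(1)] residue_gauss_kernel
    by (subst sum.reindex) (auto simp: inj_on_def intro!: sum.cong)
  finally show ?thesis by (simp add: sum_divide_distrib[symmetric])
qed

lemma contour_integral_linepath_affine:
  "contour_integral (linepath (\<alpha>*a + \<beta>) (\<alpha>*b + \<beta>)) f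
     = \<alpha> * contour_integral (linepath a b) (\<lambda>z. f (\<alpha>*z + \<beta>))"
proof -
  have "linepath (\<alpha>*a + \<beta>) (\<alpha>*b + \<beta>) x = \<alpha> * linepath a b x + \<beta>" for x
    by (simp add: linepath_def scaleR_conv_of_real algebra_simps)
  then have "contour_integral (linepath (\<alpha>*a + \<beta>) (\<alpha>*b + \<beta>)) f
      = integral {0..1} (\<lambda>x. \<alpha> * (f (\<alpha> * linepath a b x + \<beta>) * (b - a)))"
    unfolding contour_integral_integral vector_derivative_linepath_at by (simp add: algebra_simps)
  then show ?thesis
    unfolding contour_integral_integral vector_derivative_linepath_at by simp
qed

lemma contour_integral_linepath_translate:
  "contour_integral (linepath (a + c) (b + c)) f = contour_integral (linepath a b) (\<lambda>z. f (z + c))"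
  using contour_integral_linepath_affine[of 1 a c b f] by simp

lemma contour_integral_linepath_swap:
  "contour_integral (linepath b a) f = - contour_integral (linepath a b) f"
  using contour_integral_reversepath[of "linepath a b" f] by simp

lemma exp2pi_shift: "exp2pi (z + of_nat N) = exp2pi z"
proof -
  have "exp2pi (z + of_nat N) = exp2pi z * exp (of_nat N * (2 * of_real pi * \<i>))"
    unfolding exp2pi_def exp_add[symmetric] by (simp add: algebra_simps)
  then show ?thesis
    by (simp only: exp_of_nat_mult exp_two_pi_i power_one mult_1_right)
qed

lemma gauss_phase_shift:
  assumes "N > 0"
  shows "gauss_phase N (z + of_nat N) = gauss_phase N z * exp (- 2 * of_real pi * \<i> * z)"
proof -
  have "gauss_phase N z * exp (- 2 * of_real pi * \<i> * z)
      = exp (of_real pi * \<i> * z * (of_nat N - z) / of_nat N + (- 2 * of_real pi * \<i> * z))"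
    by (simp only: gauss_phase_def exp_add)
  also have "of_real pi * \<i> * z * (of_nat N - z) / of_nat N + (- 2 * of_real pi * \<i> * z)
      = of_real pi * \<i> * (z + of_nat N) * (of_nat N - (z + of_nat N)) / of_nat N"
    using assms by (simp add: field_simps)
  finally show ?thesis by (simp add: gauss_phase_def)
qed

text \<open>The kernel is not periodic, but its defect under \<open>z \<mapsto> z + N\<close> is an entire Gaussian.\<close>
lemma gauss_kernel_jump:
  assumes "N > 0" "z \<notin> \<int>"
  shows "gauss_kernel N z - gauss_kernel N (z + of_nat N) = gauss_jump N z"
proof -
  have ne: "exp2pi z - 1 \<noteq> 0" using assms exp2pi_eq_1_iff by auto
  have inv: "exp (- 2 * of_real pi * \<i> * z) * exp2pi z = 1"
    by (simp add: exp2pi_def exp_add[symmetric])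
  have "gauss_kernel N z - gauss_kernel N (z + of_nat N)
      = gauss_phase N z * (1 - exp (- 2 * of_real pi * \<i> * z)) / (exp2pi z - 1)"
    unfolding gauss_kernel_def exp2pi_shift gauss_phase_shift[OF assms(1)]
    by (simp add: diff_divide_distrib right_diff_distrib)
  also have "1 - exp (- 2 * of_real pi * \<i> * z) = exp (- 2 * of_real pi * \<i> * z) * (exp2pi z - 1)"
    using inv by (simp add: algebra_simps)
  also have "gauss_phase N z * (exp (- 2 * of_real pi * \<i> * z) * (exp2pi z - 1)) / (exp2pi z - 1)
      = gauss_phase N z * exp (- 2 * of_real pi * \<i> * z)"
    using ne by simp
  also have "\<dots> = gauss_jump N z"
  proof -
    have "of_real pi * \<i> * z * (of_nat N - z) / of_nat N + (- 2 * of_real pi * \<i> * z)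
        = - of_real pi * \<i> * z\<^sup>2 / of_nat N - of_real pi * \<i> * z"
      using assms(1) by (simp add: field_simps power2_eq_square)
    then show ?thesis
      unfolding gauss_phase_def gauss_jump_def exp_add[symmetric] by (rule arg_cong)
  qed
  finally show ?thesis .
qed

lemma continuous_on_gauss_kernel:
  assumes "\<And>z. z \<in> A \<Longrightarrow> z \<notin> \<int>"
  shows "continuous_on A (gauss_kernel N)"
  unfolding gauss_kernel_def[abs_def] gauss_phase_def exp2pi_def divide_inverse[of _ "of_nat N"]
  using assms by (intro continuous_intros) (auto simp: exp2pi_eq_1_iff[unfolded exp2pi_def])

lemma continuous_on_gauss_kernel_shift:
  assumes "\<And>z. z \<in> A \<Longrightarrow> z \<notin> \<int>"
  shows "continuous_on A (\<lambda>z. gauss_kernel N (z + of_nat N))"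
proof -
  have "z + of_nat N \<notin> \<int>" if "z \<in> A" for z
    using assms[OF that] Ints_diff[of "z + of_nat N" "of_nat N"] by auto
  then have "continuous_on ((\<lambda>z. z + of_nat N) ` A) (gauss_kernel N)"
    by (intro continuous_on_gauss_kernel) auto
  then show ?thesis
    by (intro continuous_on_compose2[of _ "gauss_kernel N" _ "\<lambda>z. z + of_nat N"])
       (auto intro: continuous_intros)
qed

text \<open>The two slanted sides differ by the translation \<open>z \<mapsto> z + N\<close>, so together they contribute
  the integral of the entire function \<^const>\<open>gauss_jump\<close> along the left side.\<close>
lemma gauss_sum_eq_contour_integrals:
  assumes "0 < R" "0 < N"
  shows "(\<Sum>c<N. gauss_phase N (of_nat c)) =
     contour_integral (linepath (slant par_left R) (slant (par_left + N) R)) (gauss_kernel N) +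
     contour_integral (linepath (slant (par_left + N) (-R)) (slant par_left (-R))) (gauss_kernel N) +
     contour_integral (linepath (slant par_left (-R)) (slant par_left R)) (gauss_jump N)"
proof -
  define s1 where "s1 = linepath (slant par_left R) (slant (par_left + N) R)"
  define s2 where "s2 = linepath (slant (par_left + N) R) (slant (par_left + N) (-R))"
  define s3 where "s3 = linepath (slant (par_left + N) (-R)) (slant par_left (-R))"
  define s4 where "s4 = linepath (slant par_left (-R)) (slant par_left R)"
  have path: "gauss_parallelogram N R = s1 +++ s2 +++ s3 +++ s4"
    by (simp add: gauss_parallelogram_def s1_def s2_def s3_def s4_def)
  have off: "z \<notin> \<int>" if "z \<in> path_image s1 \<union> path_image s2 \<union> path_image s3 \<union> path_image s4" for z
    using parallelogram_avoids_Ints[OF _ assms(1), of z N] that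
    by (auto simp: path path_image_join s1_def s2_def s3_def s4_def)
  have integrable: "gauss_kernel N contour_integrable_on s1" "gauss_kernel N contour_integrable_on s2"
    "gauss_kernel N contour_integrable_on s3" "gauss_kernel N contour_integrable_on s4"
    "(\<lambda>z. gauss_kernel N (z + of_nat N)) contour_integrable_on s4"
    unfolding s1_def s2_def s3_def s4_def
    by (intro contour_integrable_continuous_linepath continuous_on_gauss_kernel
        continuous_on_gauss_kernel_shift; use off in \<open>simp add: s1_def s2_def s3_def s4_def\<close>)+
  have "contour_integral (gauss_parallelogram N R) (gauss_kernel N)
      = contour_integral s1 (gauss_kernel N) + contour_integral s2 (gauss_kernel N)
        + contour_integral s3 (gauss_kernel N) + contour_integral s4 (gauss_kernel N)"
    unfolding path using integrable
    by (simp add: contour_integrable_joinI valid_path_join s1_def s2_def s3_def s4_def)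
  moreover have "contour_integral s2 (gauss_kernel N) = - contour_integral s4 (\<lambda>z. gauss_kernel N (z + of_nat N))"
    using contour_integral_linepath_translate[of "slant par_left R" "of_nat N" "slant par_left (-R)"]
      contour_integral_linepath_swap[of "slant par_left R" "slant par_left (-R)"]
    by (simp add: s2_def s4_def slant_shift)
  moreover have "contour_integral s4 (gauss_kernel N) - contour_integral s4 (\<lambda>z. gauss_kernel N (z + of_nat N))
      = contour_integral s4 (gauss_jump N)"
  proof -
    have "contour_integral s4 (gauss_kernel N) - contour_integral s4 (\<lambda>z. gauss_kernel N (z + of_nat N))
        = contour_integral s4 (\<lambda>z. gauss_kernel N z - gauss_kernel N (z + of_nat N))"
      using integrable(4,5) by (rule contour_integral_diff[symmetric])
    also have "\<dots> = contour_integral s4 (gauss_jump N)"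
      by (rule contour_integral_cong) (use off gauss_kernel_jump[OF assms(2)] in auto)
    finally show ?thesis .
  qed
  ultimately show ?thesis
    using contour_integral_gauss_parallelogram[OF assms] by (simp add: s1_def s3_def s4_def algebra_simps)
qed

definition edge_bound :: "nat \<Rightarrow> real \<Rightarrow> real" where
  "edge_bound N R = 2 * exp (pi * (N*R + R - 2*R*R) / N)"

lemma two_le_exp_2piR: "1 \<le> R \<Longrightarrow> 2 \<le> exp (2 * pi * R)"
proof -
  assume "1 \<le> R"
  then have "2 \<le> 1 + 2 * pi * R" using pi_gt3 mult_left_mono[of 1 R pi] by linarith
  also have "\<dots> \<le> exp (2 * pi * R)" by (rule exp_ge_add_one_self)
  finally show ?thesis .
qed

lemma norm_gauss_phase:
  "N > 0 \<Longrightarrow> norm (gauss_phase N z) = exp (pi * (2 * Re z * Im z - N * Im z) / N)"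
  by (simp add: gauss_phase_def Re_divide field_simps power2_eq_square)

lemma norm_gauss_kernel_lower_edge:
  assumes "0 < N" "1 \<le> R" "Im z = -R" "par_left + R \<le> Re z"
  shows "norm (gauss_kernel N z) \<le> edge_bound N R"
proof -
  have "1 \<le> norm (exp2pi z) - norm (1::complex)"
    using two_le_exp_2piR[OF assms(2)] assms(3) by (simp add: exp2pi_def)
  also have "\<dots> \<le> norm (exp2pi z - 1)" by (rule norm_triangle_ineq2)
  finally have denom: "1 \<le> norm (exp2pi z - 1)" .
  have "2 * R * (par_left + R) \<le> 2 * R * Re z" using assms by (intro mult_left_mono) auto
  then have "2 * Re z * Im z - N * Im z \<le> N*R + R - 2*R*R"
    using assms by (simp add: par_left_def algebra_simps)
  then have num: "norm (gauss_phase N z) \<le> exp (pi * (N*R + R - 2*R*R) / N)"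
    using assms by (simp add: norm_gauss_phase divide_right_mono)
  have "norm (gauss_kernel N z) \<le> norm (gauss_phase N z)"
    using denom by (simp add: gauss_kernel_def norm_divide divide_le_eq
        order_trans[OF _ mult_left_mono[OF denom]])
  with num show ?thesis unfolding edge_bound_def
    using exp_gt_zero[of "pi * (N*R + R - 2*R*R) / N"] by linarith
qed

lemma norm_gauss_kernel_upper_edge:
  assumes "0 < N" "1 \<le> R" "Im z = R" "Re z \<le> par_left + N - R"
  shows "norm (gauss_kernel N z) \<le> edge_bound N R"
proof -
  have "norm (exp2pi z) = inverse (exp (2 * pi * R))"
    using assms by (simp add: exp2pi_def exp_minus)
  also have "\<dots> \<le> 1/2"
    using le_imp_inverse_le[OF two_le_exp_2piR[OF assms(2)]] by simp
  finally have "1/2 \<le> norm (1::complex) - norm (exp2pi z)" by simp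
  also have "\<dots> \<le> norm (exp2pi z - 1)"
    using norm_triangle_ineq2[of 1 "exp2pi z"] by (simp add: norm_minus_commute)
  finally have denom: "1/2 \<le> norm (exp2pi z - 1)" .
  have "2 * R * Re z \<le> 2 * R * (par_left + N - R)" using assms by (intro mult_left_mono) auto
  then have "2 * Re z * Im z - N * Im z \<le> N*R + R - 2*R*R"
    using assms by (simp add: par_left_def algebra_simps)
  then have num: "norm (gauss_phase N z) \<le> exp (pi * (N*R + R - 2*R*R) / N)"
    using assms by (simp add: norm_gauss_phase divide_right_mono)
  have "norm (gauss_kernel N z) \<le> norm (gauss_phase N z) / (1/2)"
    unfolding gauss_kernel_def norm_divide using denom by (intro divide_left_mono) auto
  with num show ?thesis by (simp add: edge_bound_def)
qed

lemma norm_contour_integral_lower_edge: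
  assumes "0 < N" "1 \<le> R"
  shows "norm (contour_integral (linepath (slant par_left R) (slant (par_left + N) R)) (gauss_kernel N))
    \<le> edge_bound N R * N"
proof -
  let ?s = "linepath (slant par_left R) (slant (par_left + N) R)"
  have "z \<notin> \<int>" if "z \<in> path_image ?s" for z
    using parallelogram_avoids_Ints[of z N R] that assms
    by (auto simp: gauss_parallelogram_def path_image_join)
  then have "gauss_kernel N contour_integrable_on ?s"
    by (intro contour_integrable_continuous_linepath continuous_on_gauss_kernel) auto
  then have "norm (contour_integral ?s (gauss_kernel N))
      \<le> edge_bound N R * norm (slant (par_left + N) R - slant par_left R)"
  proof (rule contour_integral_bound_linepath)
    fix x assume "x \<in> closed_segment (slant par_left R) (slant (par_left + real N) R)"
    then obtain u where "0 \<le> u" "Re x = ((1-u)*par_left + u*(par_left+N)) + ((1-u)*R+u*R)"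
      "Im x = -((1-u)*R + u*R)" by (rule slant_segment_param)
    then have "Re x = par_left + u * N + R" "Im x = -R" "0 \<le> u * N"
      by (simp_all add: algebra_simps)
    then show "norm (gauss_kernel N x) \<le> edge_bound N R"
      using assms by (intro norm_gauss_kernel_lower_edge) auto
  qed (simp add: edge_bound_def)
  then show ?thesis by (simp add: slant_def)
qed

lemma norm_contour_integral_upper_edge:
  assumes "0 < N" "1 \<le> R"
  shows "norm (contour_integral (linepath (slant (par_left + N) (-R)) (slant par_left (-R))) (gauss_kernel N))
    \<le> edge_bound N R * N"
proof -
  let ?s = "linepath (slant (par_left + N) (-R)) (slant par_left (-R))"
  have "z \<notin> \<int>" if "z \<in> path_image ?s" for z
    using parallelogram_avoids_Ints[of z N R] that assms
    by (auto simp: gauss_parallelogram_def path_image_join)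
  then have "gauss_kernel N contour_integrable_on ?s"
    by (intro contour_integrable_continuous_linepath continuous_on_gauss_kernel) auto
  then have "norm (contour_integral ?s (gauss_kernel N))
      \<le> edge_bound N R * norm (slant par_left (-R) - slant (par_left + N) (-R))"
  proof (rule contour_integral_bound_linepath)
    fix x assume "x \<in> closed_segment (slant (par_left + real N) (-R)) (slant par_left (-R))"
    then obtain u where "0 \<le> u" "Re x = ((1-u)*(par_left+N) + u*par_left) + ((1-u)*(-R)+u*(-R))"
      "Im x = -((1-u)*(-R) + u*(-R))" by (rule slant_segment_param)
    then have "Re x = par_left + N - u * N - R" "Im x = R" "0 \<le> u * N"
      by (simp_all add: algebra_simps)
    then show "norm (gauss_kernel N x) \<le> edge_bound N R"
      using assms by (intro norm_gauss_kernel_upper_edge) auto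
  qed (simp add: edge_bound_def)
  then show ?thesis by (simp add: slant_def)
qed

lemma contour_integral_gauss_jump_tendsto:
  assumes "0 < N"
  shows "((\<lambda>R. contour_integral (linepath (slant par_left (-R)) (slant par_left R)) (gauss_jump N))
           \<longlongrightarrow> (\<Sum>c<N. gauss_phase N (of_nat c))) at_top"
proof -
  let ?G = "\<Sum>c<N. gauss_phase N (of_nat c)"
  let ?I = "\<lambda>R. contour_integral (linepath (slant par_left (-R)) (slant par_left R)) (gauss_jump N)"
  have "eventually (\<lambda>R. norm (?G - ?I R) \<le> 2 * (real N * edge_bound N R)) at_top"
    using eventually_ge_at_top[of "1::real"]
  proof eventually_elim
    case (elim R)
    then have "norm (?G - ?I R)
        \<le> norm (contour_integral (linepath (slant par_left R) (slant (par_left + N) R)) (gauss_kernel N))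
          + norm (contour_integral (linepath (slant (par_left + N) (-R)) (slant par_left (-R))) (gauss_kernel N))"
      using gauss_sum_eq_contour_integrals[of R N] assms by (simp add: norm_triangle_ineq)
    then show ?case
      using norm_contour_integral_lower_edge[OF assms elim] norm_contour_integral_upper_edge[OF assms elim]
      by (simp add: algebra_simps)
  qed
  moreover have "((\<lambda>R. 2 * (real N * edge_bound N R)) \<longlongrightarrow> 0) at_top"
    using assms unfolding edge_bound_def by real_asymp
  ultimately have "((\<lambda>R. ?G - ?I R) \<longlongrightarrow> 0) at_top"
    by (rule Lim_null_comparison)
  then have "((\<lambda>R. ?G - (?G - ?I R)) \<longlongrightarrow> ?G - 0) at_top"
    by (intro tendsto_diff tendsto_const)
  then show ?thesis by simp
qed

definition chirp :: "complex \<Rightarrow> complex" where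
  "chirp w = exp (- of_real pi * \<i> * w\<^sup>2)"

definition chirp_integral :: "real \<Rightarrow> real \<Rightarrow> complex" where
  "chirp_integral \<delta> r = contour_integral (linepath (slant \<delta> (-r)) (slant \<delta> r)) chirp"

lemma chirp_holomorphic: "chirp holomorphic_on A"
  unfolding chirp_def by (intro holomorphic_intros)

lemma chirp_integrable_linepath: "chirp contour_integrable_on linepath a b"
  by (rule contour_integrable_holomorphic_simple[OF chirp_holomorphic[of UNIV]]) auto

lemma norm_chirp: "norm (chirp w) = exp (2 * pi * Re w * Im w)"
  by (simp add: chirp_def power2_eq_square algebra_simps)

lemma norm_contour_integral_chirp_cross_edge:
  assumes "0 \<le> \<delta>"
  shows "norm (contour_integral (linepath (slant 0 b) (slant \<delta> b)) chirp)
    \<le> exp (2*pi*\<bar>b\<bar>*\<delta> - 2*pi*b*b) * \<delta>"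
proof -
  have "norm (contour_integral (linepath (slant 0 b) (slant \<delta> b)) chirp)
      \<le> exp (2*pi*\<bar>b\<bar>*\<delta> - 2*pi*b*b) * norm (slant \<delta> b - slant 0 b)"
  proof (rule contour_integral_bound_linepath[OF chirp_integrable_linepath])
    fix x assume "x \<in> closed_segment (slant 0 b) (slant \<delta> b)"
    then obtain u where u: "0 \<le> u" "u \<le> 1" "Re x = ((1-u)*0 + u*\<delta>) + ((1-u)*b + u*b)"
      "Im x = -((1-u)*b + u*b)" by (rule slant_segment_param)
    have "- b * (u * \<delta>) \<le> \<bar>b\<bar> * (u * \<delta>)"
      by (rule mult_right_mono) (use u assms in auto)
    also have "\<dots> \<le> \<bar>b\<bar> * \<delta>"
      using u assms by (intro mult_left_mono) (auto simp: mult_left_le_one_le)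
    finally have "2 * pi * (- b * (u * \<delta>)) \<le> 2 * pi * (\<bar>b\<bar> * \<delta>)"
      by (intro mult_left_mono) auto
    moreover have "2 * pi * Re x * Im x = 2 * pi * (- b * (u * \<delta>)) - 2*pi*b*b"
      using u(3,4) by (simp add: algebra_simps)
    ultimately have "2 * pi * Re x * Im x \<le> 2*pi*\<bar>b\<bar>*\<delta> - 2*pi*b*b"
      by (simp add: algebra_simps)
    then show "norm (chirp x) \<le> exp (2*pi*\<bar>b\<bar>*\<delta> - 2*pi*b*b)"
      by (simp add: norm_chirp)
  qed simp
  then show ?thesis using assms by (simp add: slant_def)
qed

lemma chirp_integral_diff:
  "chirp_integral \<delta> r - chirp_integral 0 r
     = contour_integral (linepath (slant 0 r) (slant \<delta> r)) chirp
       - contour_integral (linepath (slant 0 (-r)) (slant \<delta> (-r))) chirp"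
proof -
  define l1 where "l1 = linepath (slant 0 (-r)) (slant 0 r)"
  define l2 where "l2 = linepath (slant 0 r) (slant \<delta> r)"
  define l3 where "l3 = linepath (slant \<delta> r) (slant \<delta> (-r))"
  define l4 where "l4 = linepath (slant \<delta> (-r)) (slant 0 (-r))"
  have "(chirp has_contour_integral 0) (l1 +++ l2 +++ l3 +++ l4)"
    by (rule Cauchy_theorem_convex_simple[OF chirp_holomorphic convex_UNIV])
       (auto simp: l1_def l2_def l3_def l4_def valid_path_join)
  then have "contour_integral (l1 +++ l2 +++ l3 +++ l4) chirp = 0"
    by (rule contour_integral_unique)
  then have "contour_integral l1 chirp + contour_integral l2 chirp
      + contour_integral l3 chirp + contour_integral l4 chirp = 0"
    using chirp_integrable_linepath
    by (simp add: contour_integrable_joinI valid_path_join l1_def l2_def l3_def l4_def add.assoc)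
  then show ?thesis
    by (simp add: chirp_integral_def l1_def l2_def l3_def l4_def algebra_simps
        contour_integral_linepath_swap[of "slant \<delta> r" "slant \<delta> (-r)"]
        contour_integral_linepath_swap[of "slant \<delta> (-r)" "slant 0 (-r)"])
qed

lemma chirp_integral_shift_tendsto_0:
  assumes "0 \<le> \<delta>"
  shows "((\<lambda>r. chirp_integral \<delta> r - chirp_integral 0 r) \<longlongrightarrow> 0) at_top"
proof -
  have "eventually (\<lambda>r. norm (chirp_integral \<delta> r - chirp_integral 0 r)
      \<le> 2 * (exp (2*pi*r*\<delta> - 2*pi*r*r) * \<delta>)) at_top"
    using eventually_ge_at_top[of "0::real"]
  proof eventually_elim
    case (elim r)
    have "norm (chirp_integral \<delta> r - chirp_integral 0 r)
        \<le> norm (contour_integral (linepath (slant 0 r) (slant \<delta> r)) chirp)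
          + norm (contour_integral (linepath (slant 0 (-r)) (slant \<delta> (-r))) chirp)"
      unfolding chirp_integral_diff by (rule norm_triangle_ineq4)
    then show ?case
      using norm_contour_integral_chirp_cross_edge[OF assms, of r]
        norm_contour_integral_chirp_cross_edge[OF assms, of "-r"] elim
      by simp
  qed
  moreover have "((\<lambda>r. 2 * (exp (2*pi*r*\<delta> - 2*pi*r*r) * \<delta>)) \<longlongrightarrow> 0) at_top"
    by real_asymp
  ultimately show ?thesis by (rule Lim_null_comparison)
qed

lemma gauss_jump_rescale:
  assumes "0 < N"
  shows "gauss_jump N (of_real (sqrt N) * w - of_nat N / 2) = exp (of_real pi * \<i> * of_nat N / 4) * chirp w"
proof -
  define s where "s = (of_real (sqrt N) :: complex)"
  have s2: "s * s = of_nat N" unfolding s_def by (simp flip: of_real_mult)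
  have "(s * w - of_nat N / 2)\<^sup>2 = (s * s) * (w * w) - s * w * of_nat N + of_nat N * of_nat N / 4"
    by (simp add: power2_eq_square algebra_simps)
  then have square: "(s * w - of_nat N / 2)\<^sup>2 = of_nat N * (w * w) - s * w * of_nat N + of_nat N * of_nat N / 4"
    by (simp only: s2)
  have "- of_real pi * \<i> * (s * w - of_nat N / 2)\<^sup>2 / of_nat N - of_real pi * \<i> * (s * w - of_nat N / 2)
      = of_real pi * \<i> * of_nat N / 4 + (- of_real pi * \<i> * w\<^sup>2)"
    unfolding square using assms by (simp add: field_simps power2_eq_square)
  then show ?thesis
    unfolding s_def[symmetric] gauss_jump_def chirp_def exp_add[symmetric] by simp
qed

lemma contour_integral_gauss_jump:
  assumes "0 < N"
  shows "contour_integral (linepath (slant par_left (-R)) (slant par_left R)) (gauss_jump N)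
     = of_real (sqrt N) * exp (of_real pi * \<i> * of_nat N / 4)
       * chirp_integral ((par_left + N/2) / sqrt N) (R / sqrt N)"
proof -
  define \<delta> where "\<delta> = (par_left + N/2) / sqrt N"
  have sN: "sqrt (real N) > 0" using assms by simp
  have rescale: "slant par_left b = of_real (sqrt N) * slant \<delta> (b / sqrt N) + (- of_nat N / 2)" for b
  proof -
    have coords: "sqrt N * \<delta> = par_left + N/2" "sqrt N * (b / sqrt N) = b"
      using sN by (simp_all add: \<delta>_def)
    have "of_real (sqrt N) * slant \<delta> (b / sqrt N)
        = of_real (sqrt N * \<delta>) + of_real (sqrt N * (b / sqrt N)) * (1 - \<i>)"
      unfolding slant_def of_real_mult by (simp only: distrib_left mult.assoc)
    then show ?thesis unfolding coords slant_def by simp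
  qed
  have "contour_integral (linepath (slant par_left (-R)) (slant par_left R)) (gauss_jump N)
      = of_real (sqrt N) * contour_integral (linepath (slant \<delta> (-R / sqrt N)) (slant \<delta> (R / sqrt N)))
          (\<lambda>w. gauss_jump N (of_real (sqrt N) * w - of_nat N / 2))"
    unfolding rescale[of "-R"] rescale[of R] contour_integral_linepath_affine by simp
  also have "\<dots> = of_real (sqrt N) * (exp (of_real pi * \<i> * of_nat N / 4) * chirp_integral \<delta> (R / sqrt N))"
    unfolding gauss_jump_rescale[OF assms] chirp_integral_def
    by (simp add: contour_integral_lmul chirp_integrable_linepath)
  finally show ?thesis by (simp add: \<delta>_def)
qed

text \<open>The value of the Fresnel-type integral is read off from the case \<open>N = 1\<close>, whose Gauss sum is \<open>1\<close>.\<close>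
lemma chirp_integral_tendsto:
  assumes "0 \<le> \<delta>"
  shows "((\<lambda>r. chirp_integral \<delta> r) \<longlongrightarrow> exp (- of_real pi * \<i> / 4)) at_top"
proof -
  have "((\<lambda>R. exp (of_real pi * \<i> / 4) * chirp_integral (1/4) R) \<longlongrightarrow> 1) at_top"
    using contour_integral_gauss_jump_tendsto[of 1] contour_integral_gauss_jump[of 1]
    by (simp add: par_left_def gauss_phase_def)
  then have "((\<lambda>R. exp (- of_real pi * \<i> / 4) * (exp (of_real pi * \<i> / 4) * chirp_integral (1/4) R))
      \<longlongrightarrow> exp (- of_real pi * \<i> / 4) * 1) at_top"
    by (intro tendsto_mult tendsto_const)
  then have quarter: "((\<lambda>R. chirp_integral (1/4) R) \<longlongrightarrow> exp (- of_real pi * \<i> / 4)) at_top"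
    by (simp add: mult.assoc[symmetric] flip: exp_add)
  have "((\<lambda>r. (chirp_integral \<delta> r - chirp_integral 0 r)
        - (chirp_integral (1/4) r - chirp_integral 0 r) + chirp_integral (1/4) r)
      \<longlongrightarrow> 0 - 0 + exp (- of_real pi * \<i> / 4)) at_top"
    by (intro tendsto_add tendsto_diff chirp_integral_shift_tendsto_0 assms quarter) simp
  then show ?thesis by simp
qed

theorem quadratic_gauss_sum:
  assumes "0 < N"
  shows "(\<Sum>c<N. gauss_phase N (of_nat c)) = of_real (sqrt N) * exp (of_real pi * \<i> * (of_nat N - 1) / 4)"
proof -
  define \<delta> where "\<delta> = (par_left + N/2) / sqrt N"
  define K where "K = of_real (sqrt N) * exp (of_real pi * \<i> * of_nat N / 4)"
  have "0 < sqrt (real N)" using assms by simp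
  moreover have "0 \<le> \<delta>" unfolding \<delta>_def using assms by (auto simp: par_left_def)
  ultimately have "((\<lambda>R. chirp_integral \<delta> (R / sqrt N)) \<longlongrightarrow> exp (- of_real pi * \<i> / 4)) at_top"
    using filterlim_compose[OF chirp_integral_tendsto
        filterlim_tendsto_pos_mult_at_top[OF tendsto_const _ filterlim_ident, of "1 / sqrt N"]]
    by simp
  then have lim: "((\<lambda>R. K * chirp_integral \<delta> (R / sqrt N)) \<longlongrightarrow> K * exp (- of_real pi * \<i> / 4)) at_top"
    by (intro tendsto_mult tendsto_const)
  have "((\<lambda>R. K * chirp_integral \<delta> (R / sqrt N)) \<longlongrightarrow> (\<Sum>c<N. gauss_phase N (of_nat c))) at_top"
    using contour_integral_gauss_jump_tendsto[OF assms] contour_integral_gauss_jump[OF assms]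
    by (simp add: \<delta>_def K_def)
  then have "(\<Sum>c<N. gauss_phase N (of_nat c)) = K * exp (- of_real pi * \<i> / 4)"
    using tendsto_unique[OF trivial_limit_at_top_linorder _ lim] by blast
  also have "\<dots> = of_real (sqrt N) * exp (of_real pi * \<i> * (of_nat N - 1) / 4)"
    by (simp add: K_def mult.assoc exp_add[symmetric] field_simps)
  finally show ?thesis .
qed

section \<open>Symmetric powers of kernels\<close>

definition rearrangements :: "'a list \<Rightarrow> 'a list set" where
  "rearrangements l = {\<alpha>. mset \<alpha> = mset l}"

definition tensor_kernel :: "('a \<Rightarrow> 'a \<Rightarrow> complex) \<Rightarrow> 'a list \<Rightarrow> 'a list \<Rightarrow> complex" where
  "tensor_kernel f \<alpha> \<beta> = (\<Prod>j<length \<alpha>. f (\<alpha>!j) (\<beta>!j))"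

definition sym_norm :: "'a list \<Rightarrow> real" where
  "sym_norm l = 1 / sqrt (real (card (rearrangements l)))"

text \<open>The matrix of the symmetric power of the kernel \<open>f\<close> in the orthonormal basis of normalised
  symmetrised tensors, indexed by the weakly decreasing representatives \<open>l\<close> and \<open>m\<close>.\<close>
definition sym_power :: "('a \<Rightarrow> 'a \<Rightarrow> complex) \<Rightarrow> 'a list \<Rightarrow> 'a list \<Rightarrow> complex" where
  "sym_power f l m = of_real (sym_norm l * sym_norm m)
     * (\<Sum>\<alpha>\<in>rearrangements l. \<Sum>\<beta>\<in>rearrangements m. tensor_kernel f \<alpha> \<beta>)"

lemma rearrangements_eq_permutations_of_multiset:
  "rearrangements l = permutations_of_multiset (mset l)"
  by (simp add: rearrangements_def permutations_of_multiset_def)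

lemma finite_rearrangements [simp]: "finite (rearrangements l)"
  by (simp add: rearrangements_eq_permutations_of_multiset)

lemma self_in_rearrangements [simp]: "l \<in> rearrangements l"
  by (simp add: rearrangements_def)

lemma length_rearrangements: "\<alpha> \<in> rearrangements l \<Longrightarrow> length \<alpha> = length l"
  unfolding rearrangements_def by (metis mem_Collect_eq size_mset)

lemma set_rearrangements: "\<alpha> \<in> rearrangements l \<Longrightarrow> set \<alpha> = set l"
  unfolding rearrangements_def by (metis mem_Collect_eq set_mset_mset)

lemma card_rearrangements_mult_stab_card: "card (rearrangements l) * stab_card l = fact (length l)"
  using card_permutations_of_multiset_aux[of "mset l"]
  by (simp add: rearrangements_eq_permutations_of_multiset stab_card_def)

lemma card_rearrangements_pos: "0 < card (rearrangements l)"
  using self_in_rearrangements[of l] finite_rearrangements[of l] card_gt_0_iff by blast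

lemma sym_norm_sq: "sym_norm l * sym_norm l * real (card (rearrangements l)) = 1"
proof -
  have "rearrangements l \<noteq> {}" using self_in_rearrangements by blast
  with card_rearrangements_pos[of l] show ?thesis by (simp add: sym_norm_def)
qed

lemma card_rearrangements_map_involution:
  assumes "\<forall>x\<in>set l. \<sigma> (\<sigma> x) = x"
  shows "card (rearrangements (map \<sigma> l)) = card (rearrangements l)"
proof -
  have involutive: "map \<sigma> (map \<sigma> \<gamma>) = \<gamma>" if "set \<gamma> \<subseteq> set l \<union> \<sigma> ` set l" for \<gamma>
    using that assms by (auto intro!: map_idI)
  have "bij_betw (map \<sigma>) (rearrangements l) (rearrangements (map \<sigma> l))"
  proof (rule bij_betw_byWitness[where f'="map \<sigma>"])
    show "\<forall>\<alpha>\<in>rearrangements l. map \<sigma> (map \<sigma> \<alpha>) = \<alpha>" "\<forall>\<gamma>\<in>rearrangements (map \<sigma> l). map \<sigma> (map \<sigma> \<gamma>) = \<gamma>"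
      using involutive set_rearrangements by fastforce+
    show "map \<sigma> ` rearrangements l \<subseteq> rearrangements (map \<sigma> l)"
      by (auto simp: rearrangements_def)
    show "map \<sigma> ` rearrangements (map \<sigma> l) \<subseteq> rearrangements l"
    proof
      fix \<alpha> assume "\<alpha> \<in> map \<sigma> ` rearrangements (map \<sigma> l)"
      then obtain \<gamma> where "\<alpha> = map \<sigma> \<gamma>" "mset \<gamma> = mset (map \<sigma> l)" by (auto simp: rearrangements_def)
      then have "mset \<alpha> = mset (map \<sigma> (map \<sigma> l))" by (simp only: mset_map)
      also have "map \<sigma> (map \<sigma> l) = l" using involutive[of l] by simp
      finally show "\<alpha> \<in> rearrangements l" by (simp add: rearrangements_def)
    qed
  qed
  then show ?thesis by (rule bij_betw_same_card[symmetric])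
qed

lemma prod_nth_eq_prod_mset: "(\<Prod>j<length xs. f (xs!j)) = prod_mset (image_mset f (mset xs))"
  by (induction xs) (simp_all add: prod.lessThan_Suc_shift del: prod.lessThan_Suc)

lemma tensor_kernel_permute:
  assumes "p permutes {..<length \<alpha>}" "length \<beta> = length \<alpha>"
  shows "tensor_kernel f (permute_list p \<alpha>) (permute_list p \<beta>) = tensor_kernel f \<alpha> \<beta>"
proof -
  have "tensor_kernel f (permute_list p \<alpha>) (permute_list p \<beta>) = (\<Prod>j<length \<alpha>. f (\<alpha>!(p j)) (\<beta>!(p j)))"
    unfolding tensor_kernel_def using assms by (auto intro!: prod.cong simp: permute_list_nth)
  also have "\<dots> = tensor_kernel f \<alpha> \<beta>"
    using prod.permute[OF assms(1), of "\<lambda>j. f (\<alpha>!j) (\<beta>!j)"] by (simp add: comp_def tensor_kernel_def)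
  finally show ?thesis .
qed

text \<open>A common permutation of both arguments of the tensor kernel is absorbed by the sum over
  rearrangements, so the sum depends only on the multiset of the other argument.\<close>
lemma sum_tensor_kernel_mset_cong_right:
  assumes "mset \<beta>' = mset \<beta>" "length \<beta> = length l"
  shows "(\<Sum>\<alpha>\<in>rearrangements l. tensor_kernel f \<alpha> \<beta>') = (\<Sum>\<alpha>\<in>rearrangements l. tensor_kernel f \<alpha> \<beta>)"
proof -
  obtain p where p: "p permutes {..<length \<beta>}" "permute_list p \<beta> = \<beta>'"
    using mset_eq_permutation[OF assms(1)] by blast
  have inv_p: "inv p permutes {..<length \<beta>}" using permutes_inv[OF p(1)] .
  have pq: "permute_list p (permute_list (inv p) a) = a" "permute_list (inv p) (permute_list p a) = a"
    if "length a = length \<beta>" for a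
    using that p inv_p
    by (simp_all flip: permute_list_compose add: permutes_inv_o[OF p(1)])
  have len: "length a = length \<beta>" if "a \<in> rearrangements l" for a
    using that assms(2) length_rearrangements by simp
  show ?thesis
  proof (rule sum.reindex_bij_witness[where i="permute_list p" and j="permute_list (inv p)"])
    fix a assume a: "a \<in> rearrangements l"
    show "permute_list p (permute_list (inv p) a) = a" by (rule pq(1)[OF len[OF a]])
    show "permute_list (inv p) (permute_list p a) = a" by (rule pq(2)[OF len[OF a]])
    show "permute_list (inv p) a \<in> rearrangements l" "permute_list p a \<in> rearrangements l"
      using a len[OF a] inv_p p by (simp_all add: rearrangements_def)
    have "tensor_kernel f a \<beta>' = tensor_kernel f (permute_list p (permute_list (inv p) a)) (permute_list p \<beta>)"
      by (simp only: pq(1)[OF len[OF a]] p(2))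
    also have "\<dots> = tensor_kernel f (permute_list (inv p) a) \<beta>"
      by (rule tensor_kernel_permute) (use p len[OF a] in auto)
    finally show "tensor_kernel f (permute_list (inv p) a) \<beta> = tensor_kernel f a \<beta>'" by simp
  qed
qed

lemma sum_tensor_kernel_mset_cong_left:
  assumes "mset \<beta>' = mset \<beta>" "length \<beta> = length l"
  shows "(\<Sum>\<gamma>\<in>rearrangements l. tensor_kernel f \<beta>' \<gamma>) = (\<Sum>\<gamma>\<in>rearrangements l. tensor_kernel f \<beta> \<gamma>)"
proof -
  have swap: "tensor_kernel f \<beta> \<gamma> = tensor_kernel (\<lambda>x y. f y x) \<gamma> \<beta>"
    if "\<gamma> \<in> rearrangements l" "length \<beta> = length l" for \<beta> \<gamma>
    using length_rearrangements[OF that(1)] that(2) by (simp add: tensor_kernel_def)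
  have "length \<beta>' = length l" using assms by (metis size_mset)
  then show ?thesis
    using sum_tensor_kernel_mset_cong_right[OF assms, of "\<lambda>x y. f y x"] assms(2)
    by (simp add: swap cong: sum.cong)
qed

lemma sum_rearrangements_tensor_kernel_right:
  assumes "length \<nu> = length l"
  shows "(\<Sum>\<alpha>\<in>rearrangements l. \<Sum>\<beta>\<in>rearrangements \<nu>. tensor_kernel f \<alpha> \<beta>)
    = of_nat (card (rearrangements \<nu>)) * (\<Sum>\<alpha>\<in>rearrangements l. tensor_kernel f \<alpha> \<nu>)"
proof -
  have "(\<Sum>\<alpha>\<in>rearrangements l. \<Sum>\<beta>\<in>rearrangements \<nu>. tensor_kernel f \<alpha> \<beta>)
      = (\<Sum>\<beta>\<in>rearrangements \<nu>. \<Sum>\<alpha>\<in>rearrangements l. tensor_kernel f \<alpha> \<nu>)"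
    by (subst sum.swap, intro sum.cong refl sum_tensor_kernel_mset_cong_right)
       (use assms in \<open>auto simp: rearrangements_def\<close>)
  then show ?thesis by simp
qed

lemma sum_rearrangements_tensor_kernel_left:
  assumes "length \<nu> = length m"
  shows "(\<Sum>\<beta>\<in>rearrangements \<nu>. \<Sum>\<gamma>\<in>rearrangements m. tensor_kernel g \<beta> \<gamma>)
    = of_nat (card (rearrangements \<nu>)) * (\<Sum>\<gamma>\<in>rearrangements m. tensor_kernel g \<nu> \<gamma>)"
proof -
  have "(\<Sum>\<beta>\<in>rearrangements \<nu>. \<Sum>\<gamma>\<in>rearrangements m. tensor_kernel g \<beta> \<gamma>)
      = (\<Sum>\<beta>\<in>rearrangements \<nu>. \<Sum>\<gamma>\<in>rearrangements m. tensor_kernel g \<nu> \<gamma>)"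
    by (intro sum.cong refl sum_tensor_kernel_mset_cong_left) (use assms in \<open>auto simp: rearrangements_def\<close>)
  then show ?thesis by simp
qed

lemma sym_power_eq_right:
  assumes "length \<nu> = length l"
  shows "sym_power f l \<nu> = of_real (sym_norm l * sym_norm \<nu>) * of_nat (card (rearrangements \<nu>))
    * (\<Sum>\<alpha>\<in>rearrangements l. tensor_kernel f \<alpha> \<nu>)"
  unfolding sym_power_def sum_rearrangements_tensor_kernel_right[OF assms] by simp

lemma sym_power_eq_left:
  assumes "length \<nu> = length m"
  shows "sym_power g \<nu> m = of_real (sym_norm \<nu> * sym_norm m) * of_nat (card (rearrangements \<nu>))
    * (\<Sum>\<gamma>\<in>rearrangements m. tensor_kernel g \<nu> \<gamma>)"
  unfolding sym_power_def sum_rearrangements_tensor_kernel_left[OF assms] by simp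

lemma cnj_sym_power:
  assumes "length l = length m"
  shows "cnj (sym_power f m l) = sym_power (\<lambda>a b. cnj (f b a)) l m"
proof -
  have "cnj (tensor_kernel f \<alpha> \<beta>) = tensor_kernel (\<lambda>a b. cnj (f b a)) \<beta> \<alpha>"
    if "\<beta> \<in> rearrangements l" "\<alpha> \<in> rearrangements m" for \<alpha> \<beta>
    using length_rearrangements[OF that(1)] length_rearrangements[OF that(2)] assms
    by (simp add: tensor_kernel_def)
  then show ?thesis
    unfolding sym_power_def by (simp add: sum.swap[of _ "rearrangements m"] mult.commute cong: sum.cong)
qed

lemma lists_length_Suc_eq_image:
  "{\<beta>. length \<beta> = Suc k \<and> set \<beta> \<subseteq> X} = (\<lambda>(x, \<beta>). x # \<beta>) ` (X \<times> {\<beta>. length \<beta> = k \<and> set \<beta> \<subseteq> X})"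
  by (auto simp: image_iff length_Suc_conv)

lemma sum_lists_prod_eq_prod_sum:
  fixes h :: "nat \<Rightarrow> 'a \<Rightarrow> 'b::comm_semiring_1"
  assumes "finite X"
  shows "(\<Sum>\<beta>\<in>{\<beta>. length \<beta> = k \<and> set \<beta> \<subseteq> X}. \<Prod>j<k. h j (\<beta>!j)) = (\<Prod>j<k. \<Sum>x\<in>X. h j x)"
proof (induction k arbitrary: h)
  case 0
  have "{\<beta>::'a list. length \<beta> = 0 \<and> set \<beta> \<subseteq> X} = {[]}" by auto
  then show ?case by simp
next
  case (Suc k)
  have inj: "inj_on (\<lambda>(x, \<beta>). x # \<beta>) (X \<times> {\<beta>. length \<beta> = k \<and> set \<beta> \<subseteq> X})"
    by (auto simp: inj_on_def)
  have "(\<Sum>\<beta>\<in>{\<beta>. length \<beta> = Suc k \<and> set \<beta> \<subseteq> X}. \<Prod>j<Suc k. h j (\<beta>!j))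
      = (\<Sum>x\<in>X. \<Sum>\<beta>\<in>{\<beta>. length \<beta> = k \<and> set \<beta> \<subseteq> X}. h 0 x * (\<Prod>j<k. h (Suc j) (\<beta>!j)))"
    unfolding lists_length_Suc_eq_image sum.reindex[OF inj]
    by (simp add: sum.cartesian_product case_prod_beta prod.lessThan_Suc_shift del: prod.lessThan_Suc)
  also have "\<dots> = (\<Sum>x\<in>X. h 0 x * (\<Prod>j<k. \<Sum>y\<in>X. h (Suc j) y))"
    using Suc.IH[of "\<lambda>j. h (Suc j)"] by (simp flip: sum_distrib_left)
  also have "\<dots> = (\<Prod>j<Suc k. \<Sum>x\<in>X. h j x)"
    by (simp add: prod.lessThan_Suc_shift sum_distrib_right del: prod.lessThan_Suc)
  finally show ?case .
qed

definition letters :: "nat \<Rightarrow> int set" where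
  "letters n = {1..int n}"

definition words :: "nat \<Rightarrow> nat \<Rightarrow> int list set" where
  "words n k = {\<beta>. length \<beta> = k \<and> set \<beta> \<subseteq> letters n}"

definition kernel_mult :: "nat \<Rightarrow> (int \<Rightarrow> int \<Rightarrow> complex) \<Rightarrow> (int \<Rightarrow> int \<Rightarrow> complex) \<Rightarrow> int \<Rightarrow> int \<Rightarrow> complex" where
  "kernel_mult n f g a b = (\<Sum>x\<in>letters n. f a x * g x b)"

lemma finite_letters [simp]: "finite (letters n)"
  by (simp add: letters_def)

lemma card_letters [simp]: "card (letters n) = n"
  by (simp add: letters_def)

lemma finite_words [simp]: "finite (words n k)"
  unfolding words_def using finite_lists_length_eq[OF finite_letters[of n], of k] by (simp add: conj_commute)

lemma Akn_iff: "l \<in> Akn k n \<longleftrightarrow> length l = k \<and> sorted (rev l) \<and> set l \<subseteq> letters n"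
  by (auto simp: Akn_def letters_def sorted_wrt_rev)

lemma finite_Akn [simp]: "finite (Akn k n)"
  by (rule finite_subset[OF _ finite_words[of n k]]) (auto simp: Akn_iff words_def)

lemma length_Akn: "l \<in> Akn k n \<Longrightarrow> length l = k"
  by (simp add: Akn_iff)

lemma Akn_mset_inj:
  assumes "l \<in> Akn k n" "m \<in> Akn k n" "mset l = mset m"
  shows "l = m"
proof -
  have "sort (rev m) = rev l"
    by (rule properties_for_sort) (use assms in \<open>auto simp: Akn_iff\<close>)
  moreover have "sort (rev m) = rev m" using assms by (simp add: Akn_iff sorted_sort_id)
  ultimately show "l = m" by simp
qed

lemma sorted_desc_in_Akn: "\<beta> \<in> words n k \<Longrightarrow> rev (sort \<beta>) \<in> Akn k n"
  by (simp add: Akn_iff words_def)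

lemma words_eq_UN_rearrangements: "words n k = (\<Union>\<nu>\<in>Akn k n. rearrangements \<nu>)"
proof
  show "(\<Union>\<nu>\<in>Akn k n. rearrangements \<nu>) \<subseteq> words n k"
    using set_rearrangements length_rearrangements by (fastforce simp: Akn_iff words_def)
  show "words n k \<subseteq> (\<Union>\<nu>\<in>Akn k n. rearrangements \<nu>)"
  proof
    fix \<beta> assume "\<beta> \<in> words n k"
    then have "rev (sort \<beta>) \<in> Akn k n" by (rule sorted_desc_in_Akn)
    moreover have "\<beta> \<in> rearrangements (rev (sort \<beta>))" by (simp add: rearrangements_def)
    ultimately show "\<beta> \<in> (\<Union>\<nu>\<in>Akn k n. rearrangements \<nu>)" by blast
  qed
qed

lemma rearrangements_disjoint:
  "\<nu> \<in> Akn k n \<Longrightarrow> \<nu>' \<in> Akn k n \<Longrightarrow> \<nu> \<noteq> \<nu>' \<Longrightarrow> rearrangements \<nu> \<inter> rearrangements \<nu>' = {}"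
  using Akn_mset_inj by (auto simp: rearrangements_def)

lemma sum_words_by_shape:
  "(\<Sum>\<beta>\<in>words n k. h \<beta>) = (\<Sum>\<nu>\<in>Akn k n. \<Sum>\<beta>\<in>rearrangements \<nu>. h \<beta>)"
  unfolding words_eq_UN_rearrangements
  by (rule sum.UNION_disjoint) (simp_all add: rearrangements_disjoint)

lemma tensor_kernel_mult:
  assumes "length \<alpha> = k" "length \<gamma> = k"
  shows "tensor_kernel (kernel_mult n f g) \<alpha> \<gamma>
    = (\<Sum>\<beta>\<in>words n k. tensor_kernel f \<alpha> \<beta> * tensor_kernel g \<beta> \<gamma>)"
proof -
  have "tensor_kernel (kernel_mult n f g) \<alpha> \<gamma> = (\<Prod>j<k. \<Sum>x\<in>letters n. f (\<alpha>!j) x * g x (\<gamma>!j))"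
    using assms by (simp add: tensor_kernel_def kernel_mult_def)
  also have "\<dots> = (\<Sum>\<beta>\<in>words n k. \<Prod>j<k. f (\<alpha>!j) (\<beta>!j) * g (\<beta>!j) (\<gamma>!j))"
    unfolding words_def by (rule sum_lists_prod_eq_prod_sum[symmetric]) simp
  also have "\<dots> = (\<Sum>\<beta>\<in>words n k. tensor_kernel f \<alpha> \<beta> * tensor_kernel g \<beta> \<gamma>)"
    using assms by (intro sum.cong refl) (simp add: tensor_kernel_def prod.distrib words_def)
  finally show ?thesis .
qed

text \<open>Symmetric powers are multiplicative: grouping the words of the intermediate tensor power
  by their sorted rearrangement \<open>\<nu>\<close>, each class contributes \<open>card (rearrangements \<nu>)\<close> equal
  terms, which the normalisation \<^const>\<open>sym_norm\<close> cancels.\<close>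
lemma sym_power_mult:
  assumes "l \<in> Akn k n" "m \<in> Akn k n"
  shows "(\<Sum>\<nu>\<in>Akn k n. sym_power f l \<nu> * sym_power g \<nu> m) = sym_power (kernel_mult n f g) l m"
proof -
  define \<Phi> where "\<Phi> \<beta> = (\<Sum>\<alpha>\<in>rearrangements l. tensor_kernel f \<alpha> \<beta>)" for \<beta>
  define \<Psi> where "\<Psi> \<beta> = (\<Sum>\<gamma>\<in>rearrangements m. tensor_kernel g \<beta> \<gamma>)" for \<beta>
  define c where "c = (of_real (sym_norm l * sym_norm m) :: complex)"
  have len: "length l = k" "length m = k" using assms by (simp_all add: length_Akn)
  have shape_class: "sym_power f l \<nu> * sym_power g \<nu> m = c * (\<Sum>\<beta>\<in>rearrangements \<nu>. \<Phi> \<beta> * \<Psi> \<beta>)"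
    if "\<nu> \<in> Akn k n" for \<nu>
  proof -
    have len\<nu>: "length \<nu> = length l" "length \<nu> = length m" using that len by (simp_all add: length_Akn)
    have "\<Phi> \<beta> * \<Psi> \<beta> = \<Phi> \<nu> * \<Psi> \<nu>" if "\<beta> \<in> rearrangements \<nu>" for \<beta>
      using that len\<nu> sum_tensor_kernel_mset_cong_right[of \<beta> \<nu> l f] sum_tensor_kernel_mset_cong_left[of \<beta> \<nu> m g]
      by (simp add: \<Phi>_def \<Psi>_def rearrangements_def)
    then have "(\<Sum>\<beta>\<in>rearrangements \<nu>. \<Phi> \<beta> * \<Psi> \<beta>) = (\<Sum>\<beta>\<in>rearrangements \<nu>. \<Phi> \<nu> * \<Psi> \<nu>)"
      by (rule sum.cong[OF refl])
    then have "c * (\<Sum>\<beta>\<in>rearrangements \<nu>. \<Phi> \<beta> * \<Psi> \<beta>)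
        = c * (of_real (sym_norm \<nu> * sym_norm \<nu> * card (rearrangements \<nu>)) * of_nat (card (rearrangements \<nu>))
            * (\<Phi> \<nu> * \<Psi> \<nu>))"
      by (simp only: sym_norm_sq) simp
    also have "\<dots> = sym_power f l \<nu> * sym_power g \<nu> m"
      unfolding sym_power_eq_right[OF len\<nu>(1)] sym_power_eq_left[OF len\<nu>(2)] \<Phi>_def \<Psi>_def c_def
      by (simp add: mult_ac)
    finally show ?thesis ..
  qed
  have "sym_power (kernel_mult n f g) l m
      = c * (\<Sum>\<alpha>\<in>rearrangements l. \<Sum>\<gamma>\<in>rearrangements m. \<Sum>\<beta>\<in>words n k. tensor_kernel f \<alpha> \<beta> * tensor_kernel g \<beta> \<gamma>)"
  proof -
    have "tensor_kernel (kernel_mult n f g) \<alpha> \<gamma> = (\<Sum>\<beta>\<in>words n k. tensor_kernel f \<alpha> \<beta> * tensor_kernel g \<beta> \<gamma>)"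
      if "\<alpha> \<in> rearrangements l" "\<gamma> \<in> rearrangements m" for \<alpha> \<gamma>
      by (rule tensor_kernel_mult)
         (simp_all add: len length_rearrangements[OF that(1)] length_rearrangements[OF that(2)])
    then show ?thesis unfolding sym_power_def c_def by simp
  qed
  also have "\<dots> = c * (\<Sum>\<alpha>\<in>rearrangements l. \<Sum>\<beta>\<in>words n k. \<Sum>\<gamma>\<in>rearrangements m.
      tensor_kernel f \<alpha> \<beta> * tensor_kernel g \<beta> \<gamma>)"
    by (subst sum.cong[OF refl sum.swap]) (rule refl)
  also have "\<dots> = c * (\<Sum>\<beta>\<in>words n k. \<Phi> \<beta> * \<Psi> \<beta>)"
    unfolding \<Phi>_def \<Psi>_def sum_product by (subst sum.swap) (rule refl)
  also have "\<dots> = (\<Sum>\<nu>\<in>Akn k n. sym_power f l \<nu> * sym_power g \<nu> m)"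
    by (simp add: sum_words_by_shape sum_distrib_left shape_class)
  finally show ?thesis ..
qed

lemma sym_power_cong:
  assumes "l \<in> Akn k n" "m \<in> Akn k n"
    and "\<And>a b. a \<in> letters n \<Longrightarrow> b \<in> letters n \<Longrightarrow> f a b = g a b"
  shows "sym_power f l m = sym_power g l m"
proof -
  have "tensor_kernel f \<alpha> \<beta> = tensor_kernel g \<alpha> \<beta>" if "\<alpha> \<in> rearrangements l" "\<beta> \<in> rearrangements m" for \<alpha> \<beta>
  proof -
    have "set \<alpha> \<subseteq> letters n" "set \<beta> \<subseteq> letters n" "length \<alpha> = length \<beta>"
      using assms(1,2) set_rearrangements[OF that(1)] set_rearrangements[OF that(2)]
        length_rearrangements[OF that(1)] length_rearrangements[OF that(2)]
      by (auto simp: Akn_iff)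
    then show ?thesis unfolding tensor_kernel_def by (intro prod.cong refl assms(3)) auto
  qed
  then show ?thesis unfolding sym_power_def by (simp cong: sum.cong)
qed

definition graph_kernel :: "(int \<Rightarrow> int) \<Rightarrow> (int \<Rightarrow> complex) \<Rightarrow> int \<Rightarrow> int \<Rightarrow> complex" where
  "graph_kernel \<sigma> \<tau> a b = (if b = \<sigma> a then \<tau> a else 0)"

lemma tensor_kernel_graph_kernel:
  assumes "length \<beta> = length \<alpha>"
  shows "tensor_kernel (graph_kernel \<sigma> \<tau>) \<alpha> \<beta> = (if \<beta> = map \<sigma> \<alpha> then \<Prod>j<length \<alpha>. \<tau> (\<alpha>!j) else 0)"
proof (cases "\<beta> = map \<sigma> \<alpha>")
  case True
  then show ?thesis by (simp add: tensor_kernel_def graph_kernel_def)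
next
  case False
  then obtain j where "j < length \<alpha>" "\<beta>!j \<noteq> \<sigma> (\<alpha>!j)"
    using assms nth_equalityI[of \<beta> "map \<sigma> \<alpha>"] by auto
  then have "tensor_kernel (graph_kernel \<sigma> \<tau>) \<alpha> \<beta> = 0"
    unfolding tensor_kernel_def by (intro prod_zero bexI[of _ j]) (auto simp: graph_kernel_def)
  with False show ?thesis by simp
qed

lemma sym_power_graph_kernel:
  assumes "l \<in> Akn k n" "m \<in> Akn k n" "\<forall>a\<in>letters n. \<sigma> (\<sigma> a) = a"
  shows "sym_power (graph_kernel \<sigma> \<tau>) l m
    = (if image_mset \<sigma> (mset l) = mset m then \<Prod>j<length l. \<tau> (l!j) else 0)"
proof -
  define P where "P = (\<Prod>j<length l. \<tau> (l!j))"
  define E where "E = (image_mset \<sigma> (mset l) = mset m)"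
  have len: "length m = length l" using assms by (simp add: length_Akn)
  have inner: "(\<Sum>\<beta>\<in>rearrangements m. tensor_kernel (graph_kernel \<sigma> \<tau>) \<alpha> \<beta>) = (if E then P else 0)"
    if "\<alpha> \<in> rearrangements l" for \<alpha>
  proof -
    have \<alpha>: "mset \<alpha> = mset l" "length \<alpha> = length l"
      using that length_rearrangements[OF that] by (simp_all add: rearrangements_def)
    have "(\<Prod>j<length \<alpha>. \<tau> (\<alpha>!j)) = P"
      by (simp only: P_def prod_nth_eq_prod_mset \<alpha>(1))
    then have "tensor_kernel (graph_kernel \<sigma> \<tau>) \<alpha> \<beta> = (if \<beta> = map \<sigma> \<alpha> then P else 0)"
      if "\<beta> \<in> rearrangements m" for \<beta>
      using length_rearrangements[OF that] len \<alpha>(2) by (simp add: tensor_kernel_graph_kernel)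
    moreover have "map \<sigma> \<alpha> \<in> rearrangements m \<longleftrightarrow> E"
      using \<alpha> by (simp add: rearrangements_def E_def)
    ultimately show ?thesis by (simp add: sum.delta cong: sum.cong)
  qed
  show ?thesis
  proof (cases E)
    case True
    then have "rearrangements m = rearrangements (map \<sigma> l)" by (simp add: E_def rearrangements_def)
    then have "card (rearrangements m) = card (rearrangements l)"
      using card_rearrangements_map_involution[of l \<sigma>] assms(1,3) by (auto simp: Akn_iff)
    then have "sym_power (graph_kernel \<sigma> \<tau>) l m = of_real (sym_norm l * sym_norm l * card (rearrangements l)) * P"
      unfolding sym_power_def using inner True by (simp add: sym_norm_def)
    then show ?thesis using True by (simp add: sym_norm_sq E_def P_def)
  next
    case False
    then show ?thesis using inner by (simp add: sym_power_def E_def)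
  qed
qed

lemma sym_power_graph_kernel_id:
  assumes "l \<in> Akn k n" "m \<in> Akn k n"
  shows "sym_power (graph_kernel id \<tau>) l m = (if l = m then \<Prod>j<length l. \<tau> (l!j) else 0)"
  using sym_power_graph_kernel[OF assms, of id \<tau>] Akn_mset_inj[OF assms] by auto

lemma kernel_mult_graph_kernel_left:
  assumes "\<sigma> a \<in> letters n"
  shows "kernel_mult n (graph_kernel \<sigma> \<tau>) g a b = \<tau> a * g (\<sigma> a) b"
proof -
  have "kernel_mult n (graph_kernel \<sigma> \<tau>) g a b = (\<Sum>x\<in>letters n. if x = \<sigma> a then \<tau> a * g x b else 0)"
    unfolding kernel_mult_def graph_kernel_def by (intro sum.cong) auto
  then show ?thesis using assms by (simp add: sum.delta')
qed

lemma kernel_mult_graph_kernel_right: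
  assumes "b \<in> letters n" "\<sigma> b \<in> letters n" "\<forall>a\<in>letters n. \<sigma> (\<sigma> a) = a"
  shows "kernel_mult n f (graph_kernel \<sigma> \<tau>) a b = f a (\<sigma> b) * \<tau> (\<sigma> b)"
proof -
  have "kernel_mult n f (graph_kernel \<sigma> \<tau>) a b = (\<Sum>x\<in>letters n. if x = \<sigma> b then f a x * \<tau> x else 0)"
    unfolding kernel_mult_def graph_kernel_def using assms by (intro sum.cong) auto
  then show ?thesis using assms by (simp add: sum.delta')
qed

section \<open>The kernels of the modular data\<close>

lemma zeta_add: "zeta n (a + b) = zeta n a * zeta n b"
  by (simp add: zeta_def distrib_left add_divide_distrib exp_add)

lemma zeta_power: "zeta n q ^ e = zeta n (real e * q)"
  unfolding zeta_def exp_of_nat_mult[symmetric] by (simp add: algebra_simps)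

lemma cnj_zeta: "cnj (zeta n q) = zeta n (- q)"
  by (simp add: zeta_def exp_cnj)

lemma zeta_nonzero: "zeta n q \<noteq> 0"
  by (simp add: zeta_def)

lemma zeta_of_nat_mult_int: "0 < n \<Longrightarrow> zeta n (real n * real_of_int j) = 1"
  unfolding zeta_def by (simp add: field_simps exp_eq_1)

lemma zeta_periodic: "0 < n \<Longrightarrow> zeta n (q + real n * real_of_int j) = zeta n q"
  by (simp add: zeta_add zeta_of_nat_mult_int)

lemma zeta_eq_1_iff: "0 < n \<Longrightarrow> zeta n (of_int d) = 1 \<longleftrightarrow> int n dvd d"
proof
  assume n: "0 < n" and "zeta n (of_int d) = 1"
  then obtain j :: int where "2 * pi * of_int d / real n = of_int (2 * j) * pi"
    unfolding zeta_def exp_eq_1 by (auto simp: mult.commute)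
  then have "real_of_int d = real n * of_int j" using n pi_gt_zero by (simp add: field_simps)
  then have "d = int n * j" by (metis of_int_eq_iff of_int_mult of_int_of_nat_eq)
  then show "int n dvd d" by simp
qed (auto simp: zeta_of_nat_mult_int)

lemma sum_letters_eq: "(\<Sum>x\<in>letters n. f x) = (\<Sum>i<n. f (int i + 1))"
proof -
  have "letters n = (\<lambda>i. int i + 1) ` {..<n}"
  proof
    show "letters n \<subseteq> (\<lambda>i. int i + 1) ` {..<n}"
    proof
      fix x assume "x \<in> letters n"
      then have "x = int (nat (x - 1)) + 1" "nat (x - 1) < n" by (auto simp: letters_def)
      then show "x \<in> (\<lambda>i. int i + 1) ` {..<n}" by blast
    qed
  qed (auto simp: letters_def)
  moreover have "inj_on (\<lambda>i. int i + 1) {..<n}" by (auto simp: inj_on_def)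
  ultimately show ?thesis by (simp add: sum.reindex)
qed

lemma sum_letters_zeta:
  assumes "0 < n"
  shows "(\<Sum>x\<in>letters n. zeta n (of_int (d * x))) = (if int n dvd d then of_nat n else 0)"
proof -
  define w where "w = zeta n (of_int d)"
  have "(\<Sum>x\<in>letters n. zeta n (of_int (d * x))) = w * (\<Sum>i<n. w ^ i)"
    unfolding sum_letters_eq sum_distrib_left
    by (intro sum.cong refl) (simp add: w_def zeta_power zeta_add algebra_simps flip: power_Suc)
  moreover have "w ^ n = 1"
    using zeta_of_nat_mult_int[OF assms, of d] by (simp add: w_def zeta_power)
  ultimately show ?thesis
    using zeta_eq_1_iff[OF assms, of d] by (auto simp: w_def geometric_sum)
qed

lemma letters_dvd_diff_iff:
  assumes "a \<in> letters n" "b \<in> letters n"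
  shows "int n dvd (a - b) \<longleftrightarrow> a = b"
proof
  assume "int n dvd (a - b)"
  then obtain j where j: "a - b = int n * j" by (auto simp: dvd_def)
  have "\<bar>a - b\<bar> < int n" using assms by (auto simp: letters_def)
  have "j = 0"
  proof (rule ccontr)
    assume "j \<noteq> 0"
    then have "int n * 1 \<le> int n * \<bar>j\<bar>" by (intro mult_left_mono) auto
    then show False using \<open>\<bar>a - b\<bar> < int n\<close> j by (simp add: abs_mult)
  qed
  with j show "a = b" by simp
qed simp

definition neg_letter :: "nat \<Rightarrow> int \<Rightarrow> int" where
  "neg_letter n a = (if a = int n then int n else int n - a)"

lemma neg_letter_in_letters: "a \<in> letters n \<Longrightarrow> neg_letter n a \<in> letters n"
  by (auto simp: neg_letter_def letters_def)

lemma neg_letter_neg_letter: "a \<in> letters n \<Longrightarrow> neg_letter n (neg_letter n a) = a"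
  by (auto simp: neg_letter_def letters_def)

lemma dvd_add_iff_neg_letter:
  assumes "a \<in> letters n" "b \<in> letters n"
  shows "int n dvd (a + b) \<longleftrightarrow> b = neg_letter n a"
proof -
  obtain j where sum: "a + b = (b - neg_letter n a) + j * int n"
    by (cases "a = int n") (auto simp: neg_letter_def algebra_simps intro: that[of 2] that[of 1])
  have "int n dvd (a + b) \<longleftrightarrow> int n dvd (b - neg_letter n a)"
    unfolding sum by (rule dvd_add_times_triv_right_iff)
  also have "\<dots> \<longleftrightarrow> b = neg_letter n a"
    by (rule letters_dvd_diff_iff[OF assms(2) neg_letter_in_letters[OF assms(1)]])
  finally show ?thesis .
qed

definition fourier :: "nat \<Rightarrow> int \<Rightarrow> int \<Rightarrow> complex" where
  "fourier n a b = zeta n (of_int (a * b)) / of_real (sqrt n)"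

definition fourier_conj :: "nat \<Rightarrow> int \<Rightarrow> int \<Rightarrow> complex" where
  "fourier_conj n a b = zeta n (- of_int (a * b)) / of_real (sqrt n)"

text \<open>The phase \<open>\<zeta>^(-(n(n-1)/24))\<close> is the \<open>k\<close>-th root of the global phase of \<^const>\<open>Tmat\<close>;
  it is exactly what makes \<open>(F T)\<^sup>3 = F\<^sup>2\<close> hold on the nose, cf. \<open>fourier_twist_fourier\<close>.\<close>
definition twist :: "nat \<Rightarrow> int \<Rightarrow> complex" where
  "twist n a = zeta n (- (real n * (real n - 1) / 24)) * zeta n (of_int (a * (int n - a)) / 2)"

definition reflection :: "nat \<Rightarrow> int \<Rightarrow> int \<Rightarrow> complex" where
  "reflection n = graph_kernel (neg_letter n) (\<lambda>_. 1)"

definition identity_kernel :: "int \<Rightarrow> int \<Rightarrow> complex" where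
  "identity_kernel = graph_kernel id (\<lambda>_. 1)"

lemma involution_neg_letter: "\<forall>a\<in>letters n. neg_letter n (neg_letter n a) = a"
  by (simp add: neg_letter_neg_letter)

lemma fourier_neg_letter:
  assumes "0 < n"
  shows "fourier n (neg_letter n a) b = fourier_conj n a b"
proof -
  obtain j where j: "real_of_int (neg_letter n a * b) = - real_of_int (a * b) + real n * real_of_int j"
    by (cases "a = int n")
       (auto simp: neg_letter_def algebra_simps intro: that[of "2 * b"] that[of b])
  have "zeta n (of_int (neg_letter n a * b)) = zeta n (- of_int (a * b))"
    unfolding j by (rule zeta_periodic[OF assms])
  then show ?thesis by (simp add: fourier_def fourier_conj_def)
qed

lemma fourier_commute: "fourier n a b = fourier n b a"
  by (simp add: fourier_def mult.commute)

lemma twist_neg_letter: "a \<in> letters n \<Longrightarrow> twist n (neg_letter n a) = twist n a"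
  by (auto simp: twist_def neg_letter_def letters_def algebra_simps)

lemma monomial_sym_zeta:
  assumes "l \<in> Akn k n" "m \<in> Akn k n" "0 < n"
  shows "monomial_sym l (\<lambda>j. zeta n (of_int (m ! j)))
    = of_real (sqrt n ^ k) * (\<Sum>\<alpha>\<in>rearrangements l. tensor_kernel (fourier n) \<alpha> m)"
proof -
  have len: "length l = k" using assms by (simp add: length_Akn)
  have "(\<Prod>j<k. zeta n (of_int (m ! j)) ^ nat (\<alpha> ! j)) = of_real (sqrt n ^ k) * tensor_kernel (fourier n) \<alpha> m"
    if "\<alpha> \<in> rearrangements l" for \<alpha>
  proof -
    have "length \<alpha> = k" "set \<alpha> = set l"
      using len length_rearrangements[OF that] set_rearrangements[OF that] by auto
    then have pos: "0 < \<alpha>!j" if "j < k" for j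
      using that assms(1) nth_mem[of j \<alpha>] by (auto simp: Akn_def)
    have "zeta n (of_int (m ! j)) ^ nat (\<alpha> ! j) = of_real (sqrt n) * fourier n (\<alpha>!j) (m!j)" if "j < k" for j
      using pos[OF that] assms(3) by (simp add: zeta_power fourier_def)
    then have "(\<Prod>j<k. zeta n (of_int (m ! j)) ^ nat (\<alpha> ! j)) = (\<Prod>j<k. of_real (sqrt n) * fourier n (\<alpha>!j) (m!j))"
      by (intro prod.cong refl) simp
    also have "\<dots> = of_real (sqrt n ^ k) * tensor_kernel (fourier n) \<alpha> m"
      by (simp add: prod.distrib tensor_kernel_def \<open>length \<alpha> = k\<close>)
    finally show ?thesis .
  qed
  then show ?thesis
    unfolding monomial_sym_def len rearrangements_def[symmetric] by (simp add: sum_distrib_left)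
qed

lemma Smat_eq_sym_power:
  assumes "l \<in> Akn k n" "m \<in> Akn k n" "0 < n"
  shows "Smat k n l m = sym_power (fourier n) l m"
proof -
  define a where "a = real (card (rearrangements l))"
  define b where "b = real (card (rearrangements m))"
  define s where "s = real (stab_card l)"
  define t where "t = real (stab_card m)"
  have len: "length l = k" "length m = k" using assms by (simp_all add: length_Akn)
  have pos: "0 < a" "0 < b" by (simp_all add: a_def b_def card_rearrangements_pos)
  have "a * s = fact k" "b * t = fact k"
    using card_rearrangements_mult_stab_card[of l] card_rearrangements_mult_stab_card[of m] len
    unfolding a_def b_def s_def t_def by (metis of_nat_fact of_nat_mult)+
  then have "s * a = b * t" "t \<noteq> 0" by (auto simp: mult.commute)
  then have st: "s / t = b / a" using pos by (simp add: divide_eq_eq eq_divide_eq)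
  have ratio: "sqrt (s / t) = sym_norm l * sym_norm m * b"
    unfolding st sym_norm_def a_def[symmetric] b_def[symmetric] using pos
    by (simp add: real_sqrt_divide field_simps)
  have "sqrt (real n) ^ k \<noteq> 0" using assms by simp
  then have "Smat k n l m = of_real (sqrt (s / t)) * (\<Sum>\<alpha>\<in>rearrangements l. tensor_kernel (fourier n) \<alpha> m)"
    unfolding Smat_def monomial_sym_zeta[OF assms] s_def t_def using assms(3) by simp
  also have "\<dots> = sym_power (fourier n) l m"
    using sym_power_eq_right[of m l "fourier n"] len by (simp add: ratio b_def)
  finally show ?thesis .
qed

lemma ctrans_Smat_eq_sym_power:
  assumes "l \<in> Akn k n" "m \<in> Akn k n" "0 < n"
  shows "ctrans (Smat k n) l m = sym_power (fourier_conj n) l m"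
proof -
  have "(\<lambda>a b. cnj (fourier n b a)) = fourier_conj n"
    by (intro ext) (simp add: fourier_def fourier_conj_def cnj_zeta mult.commute)
  then show ?thesis
    using assms cnj_sym_power[of l m "fourier n"]
    by (simp add: ctrans_def Smat_eq_sym_power length_Akn)
qed

lemma Tmat_eq_sym_power:
  assumes "l \<in> Akn k n" "m \<in> Akn k n"
  shows "Tmat k n l m = sym_power (graph_kernel id (twist n)) l m"
proof -
  have "(\<Prod>j<k. twist n (l!j))
      = zeta n (- (real n * (real n - 1) / 24)) ^ k * (\<Prod>i<k. zeta n (of_int (l ! i * (int n - l ! i)) / 2))"
    by (simp add: twist_def prod.distrib)
  also have "zeta n (- (real n * (real n - 1) / 24)) ^ k = zeta n (- (real k * real n * (real n - 1) / 24))"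
    by (simp add: zeta_power algebra_simps)
  finally have "(\<Prod>j<k. twist n (l!j))
      = zeta n (- (real k * real n * (real n - 1) / 24)) * (\<Prod>i<k. zeta n (of_int (l ! i * (int n - l ! i)) / 2))" .
  then show ?thesis
    using assms by (cases "l = m") (simp_all add: sym_power_graph_kernel_id Tmat_def length_Akn)
qed

lemma Idmat_eq_sym_power:
  "l \<in> Akn k n \<Longrightarrow> m \<in> Akn k n \<Longrightarrow> Idmat l m = sym_power identity_kernel l m"
  by (simp add: identity_kernel_def sym_power_graph_kernel_id Idmat_def)

lemma ext_shift_in_range:
  assumes "0 \<le> j" "j < int (length l)"
  shows "ext n l (j + 1) = l ! nat j"
  using assms by (simp add: ext_def mod_pos_pos_trivial div_pos_pos_trivial)

lemma ext_shift_below_range: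
  assumes "- int (length l) \<le> j" "j < 0"
  shows "ext n l (j + 1) = l ! nat (j + int (length l)) + int n"
proof -
  have "(j + int (length l)) mod int (length l) = j + int (length l)"
    by (rule mod_pos_pos_trivial) (use assms in auto)
  then have mod: "j mod int (length l) = j + int (length l)" by simp
  have "(j + int (length l)) div int (length l) = 0"
    by (rule div_pos_pos_trivial) (use assms in auto)
  moreover have "int (length l) \<noteq> 0" using assms by linarith
  ultimately have "j div int (length l) = -1" by (simp add: div_add_self2)
  with mod show ?thesis by (simp add: ext_def)
qed

lemma Akn_split_largest_parts:
  assumes "m \<in> Akn k n"
  obtains q rest where "m = replicate q (int n) @ rest" "\<forall>x\<in>set rest. 0 < x \<and> x < int n"
    "sorted (rev rest)"
proof -
  define q where "q = length (takeWhile (\<lambda>x. x = int n) m)"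
  define rest where "rest = dropWhile (\<lambda>x. x = int n) m"
  have "takeWhile (\<lambda>x. x = int n) m = replicate q (int n)"
    unfolding q_def by (rule replicate_length_same[symmetric]) (auto dest: set_takeWhileD)
  then have m: "m = replicate q (int n) @ rest"
    using takeWhile_dropWhile_id[of "\<lambda>x. x = int n" m] rest_def by simp
  have bounds: "\<forall>x\<in>set m. 0 < x \<and> x \<le> int n" using assms by (auto simp: Akn_def)
  have sorted: "sorted (rev rest)" using assms m by (simp add: Akn_iff sorted_append)
  have "\<forall>x\<in>set rest. x < int n"
  proof (cases rest)
    case (Cons h t)
    then have "hd rest \<noteq> int n"
      using hd_dropWhile[of "\<lambda>x. x = int n" m] rest_def by simp
    then have "h \<noteq> int n" using Cons by simp
    moreover have "h \<le> int n" "\<forall>x\<in>set t. x \<le> h"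
      using bounds m Cons sorted by (auto simp: sorted_append)
    ultimately show ?thesis using Cons by fastforce
  qed simp
  with bounds m sorted that show ?thesis by auto
qed

lemma pstar_split:
  assumes "m = replicate q (int n) @ rest" "\<forall>x\<in>set rest. x < int n"
  shows "pstar n m = replicate q (int n) @ rev (map (\<lambda>x. int n - x) rest)"
proof -
  define k where "k = length m"
  define \<rho> where "\<rho> = map (\<lambda>x. int n - x) (rev m)"
  have "count (mset m) (int n) = q" using assms by (auto simp: count_eq_zero_iff)
  then have pstar: "pstar n m = map (\<lambda>i. ext n \<rho> (int i - int q)) [1..<k + 1]"
    by (simp only: pstar_def Let_def \<rho>_def k_def)
  have len: "length \<rho> = k" "k = q + length rest" using assms by (simp_all add: \<rho>_def k_def)
  show ?thesis
  proof (rule nth_equalityI)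
    fix p assume "p < length (pstar n m)"
    then have p: "p < k" by (simp add: pstar del: upt_Suc)
    have "pstar n m ! p = ext n \<rho> ((int p - int q) + 1)"
      using p by (simp add: pstar nth_map_upt algebra_simps del: upt_Suc)
    also have "\<dots> = (replicate q (int n) @ rev (map (\<lambda>x. int n - x) rest)) ! p"
    proof (cases "p < q")
      case True
      then have "ext n \<rho> ((int p - int q) + 1) = \<rho> ! (p + k - q) + int n"
      proof -
        have "nat ((int p - int q) + int (length \<rho>)) = p + k - q" using True len by simp
        then show ?thesis using True len by (subst ext_shift_below_range) auto
      qed
      also have "\<rho> ! (p + k - q) = int n - m ! (q - Suc p)"
        using True len by (simp add: \<rho>_def rev_nth k_def)
      finally show ?thesis using True assms(1) by (simp add: nth_append)
    next
      case False
      then have "ext n \<rho> ((int p - int q) + 1) = \<rho> ! (p - q)"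
      proof -
        have "nat (int p - int q) = p - q" using False by simp
        then show ?thesis using False p len by (subst ext_shift_in_range) auto
      qed
      also have "\<rho> ! (p - q) = int n - m ! (k - Suc (p - q))"
        using False p by (simp add: \<rho>_def rev_nth k_def)
      also have "k - Suc (p - q) = length (replicate q (int n)) + (length rest - Suc (p - q))"
        using False p len by simp
      also have "m ! \<dots> = rest ! (length rest - Suc (p - q))"
        unfolding assms(1) by (rule nth_append_length_plus)
      finally show ?thesis using False p len by (simp add: nth_append rev_nth)
    qed
    finally show "pstar n m ! p = (replicate q (int n) @ rev (map (\<lambda>x. int n - x) rest)) ! p" .
  qed (simp add: pstar len del: upt_Suc)
qed

lemma pstar_in_Akn_and_mset:
  assumes "m \<in> Akn k n"
  shows "pstar n m \<in> Akn k n" "mset (pstar n m) = image_mset (neg_letter n) (mset m)"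
proof -
  obtain q rest where qr: "m = replicate q (int n) @ rest" "\<forall>x\<in>set rest. 0 < x \<and> x < int n"
    "sorted (rev rest)" using Akn_split_largest_parts[OF assms] by blast
  have pstar: "pstar n m = replicate q (int n) @ rev (map (\<lambda>x. int n - x) rest)"
    using pstar_split qr by blast
  have "q > 0 \<Longrightarrow> 1 \<le> int n" using assms qr(1) by (auto simp: Akn_def)
  moreover have "sorted (map (\<lambda>x. int n - x) rest)"
    using qr(3) by (simp add: sorted_wrt_map sorted_wrt_rev)
  ultimately show "pstar n m \<in> Akn k n"
    using assms qr unfolding Akn_iff pstar by (auto simp: letters_def sorted_append)
  have "image_mset (neg_letter n) (mset m) = replicate_mset q (int n) + image_mset (\<lambda>x. int n - x) (mset rest)"
    using qr(1,2) by (auto simp: neg_letter_def intro!: image_mset_cong)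
  then show "mset (pstar n m) = image_mset (neg_letter n) (mset m)" by (simp add: pstar)
qed

lemma image_mset_neg_letter_twice:
  assumes "set l \<subseteq> letters n"
  shows "image_mset (neg_letter n) (image_mset (neg_letter n) (mset l)) = mset l"
proof -
  have "image_mset (\<lambda>x. neg_letter n (neg_letter n x)) (mset l) = image_mset id (mset l)"
    by (rule image_mset_cong) (use assms neg_letter_neg_letter in auto)
  then show ?thesis by (simp add: image_mset.compositionality comp_def)
qed

lemma Cmat_eq_sym_power:
  assumes "l \<in> Akn k n" "m \<in> Akn k n"
  shows "Cmat n l m = sym_power (reflection n) l m"
proof -
  have sets: "set l \<subseteq> letters n" "set m \<subseteq> letters n" using assms by (auto simp: Akn_iff)
  have "l = pstar n m \<longleftrightarrow> image_mset (neg_letter n) (mset l) = mset m"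
  proof
    assume "l = pstar n m"
    then show "image_mset (neg_letter n) (mset l) = mset m"
      using pstar_in_Akn_and_mset(2)[OF assms(2)] image_mset_neg_letter_twice[OF sets(2)] by simp
  next
    assume "image_mset (neg_letter n) (mset l) = mset m"
    then have "mset (pstar n m) = mset l"
      using pstar_in_Akn_and_mset(2)[OF assms(2)] image_mset_neg_letter_twice[OF sets(1)] by simp
    then show "l = pstar n m"
      using Akn_mset_inj[OF assms(1) pstar_in_Akn_and_mset(1)[OF assms(2)]] by simp
  qed
  then show ?thesis
    using sym_power_graph_kernel[OF assms involution_neg_letter]
    by (simp add: Cmat_def reflection_def)
qed

lemma of_real_sqrt_mult_self: "(of_real (sqrt (real n)) * of_real (sqrt (real n)) :: complex) = of_nat n"
  by (simp flip: of_real_mult)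

lemma sum_letters_fourier_products:
  assumes "0 < n"
  shows "(\<Sum>x\<in>letters n. zeta n (of_int (s * x)) / of_real (sqrt n) * (zeta n (of_int (t * x)) / of_real (sqrt n)))
    = (if int n dvd (s + t) then 1 else 0)"
proof -
  have "(\<Sum>x\<in>letters n. zeta n (of_int (s * x)) / of_real (sqrt n) * (zeta n (of_int (t * x)) / of_real (sqrt n)))
      = (\<Sum>x\<in>letters n. zeta n (of_int ((s + t) * x))) / of_nat n"
    unfolding sum_divide_distrib
    by (intro sum.cong refl) (simp add: zeta_add[symmetric] of_real_sqrt_mult_self algebra_simps)
  then show ?thesis using sum_letters_zeta[OF assms, of "s + t"] assms by simp
qed

lemma fourier_mult_fourier:
  assumes "0 < n" "a \<in> letters n" "b \<in> letters n"
  shows "kernel_mult n (fourier n) (fourier n) a b = reflection n a b"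
proof -
  have "kernel_mult n (fourier n) (fourier n) a b = (if int n dvd (a + b) then 1 else 0)"
    using sum_letters_fourier_products[OF assms(1), of a b]
    by (simp add: kernel_mult_def fourier_def mult.commute)
  then show ?thesis
    using dvd_add_iff_neg_letter[OF assms(2,3)] by (simp add: reflection_def graph_kernel_def)
qed

lemma fourier_mult_fourier_conj:
  assumes "0 < n" "a \<in> letters n" "b \<in> letters n"
  shows "kernel_mult n (fourier n) (fourier_conj n) a b = identity_kernel a b"
proof -
  have "kernel_mult n (fourier n) (fourier_conj n) a b = (if int n dvd (a - b) then 1 else 0)"
    using sum_letters_fourier_products[OF assms(1), of a "-b"]
    by (simp add: kernel_mult_def fourier_def fourier_conj_def mult.commute)
  then show ?thesis
    using letters_dvd_diff_iff[OF assms(2,3)] by (auto simp: identity_kernel_def graph_kernel_def)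
qed

lemma fourier_conj_mult_fourier:
  assumes "0 < n" "a \<in> letters n" "b \<in> letters n"
  shows "kernel_mult n (fourier_conj n) (fourier n) a b = identity_kernel a b"
proof -
  have "kernel_mult n (fourier_conj n) (fourier n) a b = (if int n dvd (b - a) then 1 else 0)"
    using sum_letters_fourier_products[OF assms(1), of "-a" b]
    by (simp add: kernel_mult_def fourier_def fourier_conj_def mult.commute)
  then show ?thesis
    using letters_dvd_diff_iff[OF assms(3,2)] by (auto simp: identity_kernel_def graph_kernel_def)
qed

lemma reflection_mult_reflection:
  assumes "a \<in> letters n"
  shows "kernel_mult n (reflection n) (reflection n) a b = identity_kernel a b"
  using assms
  by (simp add: reflection_def identity_kernel_def kernel_mult_graph_kernel_left neg_letter_in_letters)
     (simp add: graph_kernel_def neg_letter_neg_letter eq_commute)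

lemma reflection_mult_fourier:
  assumes "0 < n" "a \<in> letters n"
  shows "kernel_mult n (reflection n) (fourier n) a b = fourier_conj n a b"
  using assms
  by (simp add: reflection_def kernel_mult_graph_kernel_left neg_letter_in_letters fourier_neg_letter)

lemma fourier_mult_reflection:
  assumes "0 < n" "b \<in> letters n"
  shows "kernel_mult n (fourier n) (reflection n) a b = fourier_conj n a b"
proof -
  have "kernel_mult n (fourier n) (reflection n) a b = fourier n (neg_letter n b) a"
    using assms involution_neg_letter
    by (simp add: reflection_def kernel_mult_graph_kernel_right neg_letter_in_letters fourier_commute)
  also have "\<dots> = fourier_conj n a b"
    by (simp add: fourier_neg_letter[OF assms(1)] fourier_conj_def mult.commute)
  finally show ?thesis .
qed

lemma reflection_twist_reflection:
  assumes "a \<in> letters n" "b \<in> letters n"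
  shows "kernel_mult n (reflection n) (kernel_mult n (graph_kernel id (twist n)) (reflection n)) a b
    = graph_kernel id (twist n) a b"
  using assms
  by (simp add: reflection_def kernel_mult_graph_kernel_left neg_letter_in_letters)
     (simp add: graph_kernel_def neg_letter_neg_letter twist_neg_letter eq_commute)

definition quad_phase :: "nat \<Rightarrow> int \<Rightarrow> complex" where
  "quad_phase n y = zeta n (of_int (y * (int n - y)) / 2)"

lemma even_mult_one_minus: "even (t * (1 - t :: int))"
  by (cases "even t") auto

lemma quad_phase_periodic:
  assumes "0 < n"
  shows "quad_phase n (r + int n * t) = quad_phase n r"
proof -
  obtain e where e: "t * (1 - t) = 2 * e" using even_mult_one_minus[of t] by (rule evenE)
  have "(r + int n * t) * (int n - (r + int n * t))
      = r * (int n - r) + int n * int n * (t * (1 - t)) - 2 * int n * r * t"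
    by algebra
  then have "(r + int n * t) * (int n - (r + int n * t)) = r * (int n - r) + 2 * (int n * (int n * e - r * t))"
    unfolding e by algebra
  then have "real_of_int ((r + int n * t) * (int n - (r + int n * t))) / 2
      = real_of_int (r * (int n - r)) / 2 + real n * real_of_int (int n * e - r * t)"
    by simp
  then show ?thesis
    unfolding quad_phase_def by (simp only: zeta_periodic[OF assms])
qed

lemma quad_phase_mod: "0 < n \<Longrightarrow> quad_phase n y = quad_phase n (y mod int n)"
  using quad_phase_periodic[of n "y mod int n" "y div int n"] by simp

lemma sum_quad_phase_shift:
  assumes "0 < n"
  shows "(\<Sum>x\<in>letters n. quad_phase n (x - d)) = (\<Sum>c<n. quad_phase n (int c))"
proof -
  define f where "f x = (x - d) mod int n" for x
  have inj: "inj_on f (letters n)"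
    by (rule inj_onI) (auto simp: f_def mod_eq_dvd_iff letters_dvd_diff_iff)
  have "f ` letters n \<subseteq> {0..<int n}" using assms by (auto simp: f_def)
  then have image: "f ` letters n = int ` {..<n}"
    using card_image[OF inj] by (simp add: card_subset_eq image_int_atLeastLessThan lessThan_atLeast0)
  have "(\<Sum>x\<in>letters n. quad_phase n (x - d)) = (\<Sum>x\<in>letters n. quad_phase n (f x))"
    unfolding f_def by (intro sum.cong refl quad_phase_mod[OF assms])
  also have "\<dots> = (\<Sum>c\<in>f ` letters n. quad_phase n c)"
    by (simp add: sum.reindex[OF inj])
  also have "\<dots> = (\<Sum>c<n. quad_phase n (int c))"
    unfolding image by (simp add: sum.reindex)
  finally show ?thesis .
qed

lemma sum_quad_phase:
  assumes "0 < n"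
  shows "(\<Sum>c<n. quad_phase n (int c)) = of_real (sqrt n) * zeta n (real n * (real n - 1) / 8)"
proof -
  have "quad_phase n (int c) = gauss_phase n (of_nat c)" for c
    unfolding gauss_phase_def quad_phase_def zeta_def
    using assms by (intro arg_cong[where f=exp]) (simp add: field_simps)
  moreover have "exp (of_real pi * \<i> * (of_nat n - 1) / 4) = zeta n (real n * (real n - 1) / 8)"
    unfolding zeta_def using assms by (intro arg_cong[where f=exp]) (simp add: field_simps)
  ultimately show ?thesis using quadratic_gauss_sum[OF assms] by simp
qed

text \<open>Completing the square turns the middle sum into a shifted Gauss sum.\<close>
lemma fourier_twist_fourier:
  assumes n: "0 < n" and "a \<in> letters n" "b \<in> letters n"
  shows "(\<Sum>x\<in>letters n. fourier n a x * twist n x * fourier n x b) * twist n a * twist n b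
    = fourier n a b"
proof -
  define d where "d = a + b"
  define t0 where "t0 = - (real n * (real n - 1) / 24)"
  define D where "D = real_of_int (d * (int n + d)) / 2"
  define E where "E = real n * (real n - 1) / 8"
  define s where "s = (of_real (sqrt (real n)) :: complex)"
  have s2: "s * s = of_nat n" unfolding s_def by (rule of_real_sqrt_mult_self)
  have summand: "fourier n a x * twist n x * fourier n x b = zeta n (t0 + D) / of_nat n * quad_phase n (x - d)" for x
  proof -
    have square: "real_of_int (a * x) + real_of_int (x * (int n - x)) / 2 + real_of_int (x * b)
        = real_of_int ((x - d) * (int n - (x - d))) / 2 + D"
      unfolding D_def d_def by (simp add: field_simps)
    have "fourier n a x * twist n x * fourier n x b
        = zeta n t0 * (zeta n (real_of_int (a * x)) * zeta n (real_of_int (x * (int n - x)) / 2)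
            * zeta n (real_of_int (x * b))) / (s * s)"
      by (simp add: fourier_def twist_def s_def t0_def)
    also have "\<dots> = zeta n t0 * zeta n (real_of_int ((x - d) * (int n - (x - d))) / 2 + D) / of_nat n"
      unfolding s2 zeta_add[symmetric] square ..
    finally show ?thesis by (simp add: zeta_add quad_phase_def)
  qed
  have "(\<Sum>x\<in>letters n. fourier n a x * twist n x * fourier n x b)
      = zeta n (t0 + D) / of_nat n * (\<Sum>x\<in>letters n. quad_phase n (x - d))"
    by (simp add: summand sum_distrib_left)
  also have "\<dots> = zeta n (t0 + D) / of_nat n * (s * zeta n E)"
    unfolding sum_quad_phase_shift[OF n] sum_quad_phase[OF n] s_def E_def ..
  finally have sum: "(\<Sum>x\<in>letters n. fourier n a x * twist n x * fourier n x b)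
      = zeta n (t0 + D) / of_nat n * (s * zeta n E)" .
  have twist: "twist n c = zeta n (t0 + real_of_int (c * (int n - c)) / 2)" for c
    by (simp only: twist_def t0_def zeta_add)
  have "(\<Sum>x\<in>letters n. fourier n a x * twist n x * fourier n x b) * twist n a * twist n b
      = (s / of_nat n) * zeta n ((t0 + D) + E + (t0 + real_of_int (a * (int n - a)) / 2)
          + (t0 + real_of_int (b * (int n - b)) / 2))"
    unfolding sum twist[of a] twist[of b] zeta_add by (simp add: algebra_simps)
  also have "(t0 + D) + E + (t0 + real_of_int (a * (int n - a)) / 2) + (t0 + real_of_int (b * (int n - b)) / 2)
      = real_of_int (a * b) + real n * real_of_int d"
    unfolding t0_def D_def E_def d_def by (simp add: field_simps)
  also have "zeta n (real_of_int (a * b) + real n * real_of_int d) = zeta n (real_of_int (a * b))"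
    by (rule zeta_periodic[OF n])
  also have "s / of_nat n = 1 / s" using s2 n by (simp add: field_simps s_def)
  finally show ?thesis by (simp add: fourier_def s_def)
qed

lemma fourier_twist_cube:
  assumes n: "0 < n" and "a \<in> letters n" "b \<in> letters n"
  defines "G \<equiv> kernel_mult n (fourier n) (graph_kernel id (twist n))"
  shows "kernel_mult n G (kernel_mult n G G) a b = kernel_mult n (fourier n) (fourier n) a b"
proof -
  have G: "G x y = fourier n x y * twist n y" if "y \<in> letters n" for x y
    using that by (simp add: G_def kernel_mult_graph_kernel_right)
  have GG: "kernel_mult n G G x y = fourier n x y / twist n x" if "x \<in> letters n" "y \<in> letters n" for x y
  proof -
    have "kernel_mult n G G x y = (\<Sum>z\<in>letters n. fourier n x z * twist n z * fourier n z y) * twist n y"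
      unfolding kernel_mult_def sum_distrib_right using that by (intro sum.cong refl) (simp add: G)
    then show ?thesis
      using fourier_twist_fourier[OF n that] zeta_nonzero by (simp add: twist_def field_simps)
  qed
  show ?thesis
    unfolding kernel_mult_def[of n G "kernel_mult n G G"] kernel_mult_def[of n "fourier n"]
    using assms(2,3) zeta_nonzero by (intro sum.cong refl) (simp add: G GG twist_def)
qed

definition is_sym_power :: "nat \<Rightarrow> nat \<Rightarrow> (int list \<Rightarrow> int list \<Rightarrow> complex) \<Rightarrow> (int \<Rightarrow> int \<Rightarrow> complex) \<Rightarrow> bool" where
  "is_sym_power k n M f \<longleftrightarrow> (\<forall>l\<in>Akn k n. \<forall>m\<in>Akn k n. M l m = sym_power f l m)"

lemma is_sym_power_mmult:
  assumes "is_sym_power k n M f" "is_sym_power k n N g"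
  shows "is_sym_power k n (mmult (Akn k n) M N) (kernel_mult n f g)"
  using assms sym_power_mult by (simp add: is_sym_power_def mmult_def cong: sum.cong)

lemma meq_if_is_sym_power:
  assumes "is_sym_power k n M f" "is_sym_power k n N g"
    and "\<And>a b. a \<in> letters n \<Longrightarrow> b \<in> letters n \<Longrightarrow> f a b = g a b"
  shows "meq (Akn k n) M N"
  using assms sym_power_cong[of _ k n _ f g] by (simp add: is_sym_power_def meq_def)

theorem mainTheorem4:
  fixes k n :: nat
  assumes "k \<ge> 1" and "n \<ge> 1"
  defines "A \<equiv> Akn k n"
  defines "S \<equiv> Smat k n" and "T \<equiv> Tmat k n" and "C \<equiv> Cmat n"
  defines "ST \<equiv> mmult A S T"
  shows "meq A (mmult A ST (mmult A ST ST)) (mmult A S S)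
       \<and> meq A (mmult A S S) C
       \<and> meq A (mmult A C C) Idmat
       \<and> meq A (mmult A S (ctrans S)) Idmat
       \<and> meq A (mmult A (ctrans S) S) Idmat
       \<and> meq A (ctrans S) (mmult A C S)
       \<and> meq A (ctrans S) (mmult A S C)
       \<and> meq A (mmult A C (mmult A T C)) T"
proof -
  have n: "0 < n" using assms(2) by simp
  note mult = is_sym_power_mmult[of k n]
  have S: "is_sym_power k n S (fourier n)"
    using Smat_eq_sym_power n by (simp add: is_sym_power_def S_def)
  have S': "is_sym_power k n (ctrans S) (fourier_conj n)"
    using ctrans_Smat_eq_sym_power n by (simp add: is_sym_power_def S_def)
  have T: "is_sym_power k n T (graph_kernel id (twist n))"
    using Tmat_eq_sym_power by (simp add: is_sym_power_def T_def)
  have C: "is_sym_power k n C (reflection n)"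
    using Cmat_eq_sym_power by (simp add: is_sym_power_def C_def)
  have I: "is_sym_power k n Idmat identity_kernel"
    using Idmat_eq_sym_power by (simp add: is_sym_power_def)
  have ST: "is_sym_power k n ST (kernel_mult n (fourier n) (graph_kernel id (twist n)))"
    unfolding ST_def A_def by (rule mult[OF S T])
  show ?thesis
    unfolding A_def
    by (intro conjI meq_if_is_sym_power[OF mult[OF ST mult[OF ST ST]] mult[OF S S]]
        meq_if_is_sym_power[OF mult[OF S S] C] meq_if_is_sym_power[OF mult[OF C C] I]
        meq_if_is_sym_power[OF mult[OF S S'] I] meq_if_is_sym_power[OF mult[OF S' S] I]
        meq_if_is_sym_power[OF S' mult[OF C S]] meq_if_is_sym_power[OF S' mult[OF S C]]
        meq_if_is_sym_power[OF mult[OF C mult[OF T C]] T])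
       (simp_all add: n fourier_twist_cube fourier_mult_fourier reflection_mult_reflection
         fourier_mult_fourier_conj fourier_conj_mult_fourier reflection_mult_fourier
         fourier_mult_reflection reflection_twist_reflection)
qed

end
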